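(* Let $\alpha>0$, let $W$ be a standard Brownian motion on a filtered probability space $(\Omega,\{\mathscr{F}_t\},\mathbb{P})$, and let $X$ solve $dX_t=-\alpha X_t\,dt+dW_t$, $X_0=0$. Let $X^*_t=\sup_{0\le s\le t}|X_s|$. There exists a function $\phi:\mathbb{R}_+\to\mathbb{R}_+$ satisfying $\phi(\delta)\to0$ as $\delta\to0$ such that for any stopping time $\tau$ with respect to $\{\mathscr{F}_t\}$ and any $\delta,\lambda>0$, \[ \mathbb{P}\big(X^*_\tau\ge2\lambda,\ \log^{1/2}(1+\alpha\tau)<\delta\lambda\big)\le\phi(\delta)\,\mathbb{P}\big(X^*_\tau\ge\lambda\big). \] *)

theory Defs
  imports "HOL-Probability.Probability"
begin

text \<open>A standard (one-dimensional) Brownian motion W with respect to a filtration F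
  (indexed by [0,\<infinity>], as ennreal, so that stopping times may take the value \<infinity>)
  on the probability space M.\<close>
definition brownian_motion_wrt ::
  "'a measure \<Rightarrow> (ennreal \<Rightarrow> 'a measure) \<Rightarrow> (real \<Rightarrow> 'a \<Rightarrow> real) \<Rightarrow> bool" where
  "brownian_motion_wrt M F W \<longleftrightarrow>
     prob_space M \<and> filtration (space M) F \<and> (\<forall>t. sets (F t) \<subseteq> sets M) \<and>
     (\<forall>\<omega>\<in>space M. W 0 \<omega> = 0) \<and>
     (\<forall>\<omega>\<in>space M. continuous_on {0..} (\<lambda>t. W t \<omega>)) \<and>
     (\<forall>t\<ge>0. W t \<in> borel_measurable (F (ennreal t))) \<and>
     (\<forall>s t. 0 \<le> s \<and> s < t \<longrightarrow>
        distributed M lborel (\<lambda>\<omega>. W t \<omega> - W s \<omega>) (normal_density 0 (sqrt (t - s))) \<and>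
        (\<forall>A\<in>sets (F (ennreal s)). \<forall>B\<in>sets borel.
           measure M (A \<inter> ((\<lambda>\<omega>. W t \<omega> - W s \<omega>) -` B \<inter> space M)) =
           measure M A * measure M ((\<lambda>\<omega>. W t \<omega> - W s \<omega>) -` B \<inter> space M)))"

text \<open>X solves dX_t = -\<alpha> X_t dt + dW_t, X_0 = 0 (additive noise, so the SDE is the
  pathwise integral equation X_t = W_t - \<alpha> \<integral>_0^t X_s ds), with continuous adapted paths.\<close>
definition OU_solution ::
  "'a measure \<Rightarrow> (ennreal \<Rightarrow> 'a measure) \<Rightarrow> real \<Rightarrow> (real \<Rightarrow> 'a \<Rightarrow> real) \<Rightarrow> (real \<Rightarrow> 'a \<Rightarrow> real) \<Rightarrow> bool" where
  "OU_solution M F \<alpha> W X \<longleftrightarrow>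
     (\<forall>t\<ge>0. X t \<in> borel_measurable (F (ennreal t))) \<and>
     (\<forall>\<omega>\<in>space M. continuous_on {0..} (\<lambda>t. X t \<omega>) \<and>
        (\<forall>t\<ge>0. X t \<omega> = W t \<omega> - \<alpha> * integral {0..t} (\<lambda>s. X s \<omega>)))"

definition run_max :: "(real \<Rightarrow> 'a \<Rightarrow> real) \<Rightarrow> ('a \<Rightarrow> ennreal) \<Rightarrow> 'a \<Rightarrow> ereal" where
  "run_max X \<tau> \<omega> = (SUP s\<in>{s. 0 \<le> s \<and> ennreal s \<le> \<tau> \<omega>}. ereal \<bar>X s \<omega>\<bar>)"

end

theory Submission
  imports Defs "HOL-Real_Asymp.Real_Asymp"
begin

text \<open>
  On the event in question, \<open>\<tau> < T = (e\<^sup>x - 1) / \<alpha>\<close> with \<open>x = (\<delta>l)\<^sup>2\<close>, and \<open>|X|\<close> exceeds \<open>3l/2\<close>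
  before \<open>\<tau>\<close>. At the first time \<open>\<sigma> \<le> \<tau>\<close> at which \<open>|X|\<close> reaches \<open>l\<close> the event \<open>X\<^sup>*\<^sub>\<tau> \<ge> l\<close> has
  occurred, and afterwards \<open>|X|\<close> must still rise by \<open>3l/8\<close> within time \<open>T\<close>. Since the drift
  \<open>-\<alpha>X\<close> contracts by \<open>e\<^sup>-\<^sup>1\<close> over every time interval of length \<open>1/\<alpha>\<close>, such a rise forces the
  Brownian motion to move by \<open>l/16\<close> on one of at most \<open>\<lceil>\<alpha>T\<rceil> \<le> e\<^sup>x\<close> such intervals (or by \<open>3l/16\<close>
  on \<open>[\<sigma>, \<sigma> + T]\<close> when \<open>x\<close> is small). The increments after \<open>\<sigma>\<close> are independent of \<open>F\<^sub>\<sigma>\<close>, and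
  Levy's reflection inequality bounds the conditional probability of such a move by
  \<open>4 e\<^sup>x exp(-\<alpha>l\<^sup>2/2048) \<le> 4 exp(-\<alpha>/(8192\<delta>\<^sup>2))\<close>, which vanishes as \<open>\<delta> \<rightarrow> 0\<close>. The strong
  Markov property at \<open>\<sigma>\<close> is replaced by first crossings of the dyadic grids and monotone limits.
\<close>

section \<open>Gaussian estimates\<close>

lemma normal_density_le_shifted:
  assumes "\<sigma> > 0" "c \<ge> 0" "x \<ge> c"
  shows "normal_density 0 \<sigma> x \<le> exp (- (c^2) / (2*\<sigma>^2)) * normal_density c \<sigma> x"
proof -
  have "c^2 + (x-c)^2 \<le> x^2"
    using assms by (simp add: power2_eq_square algebra_simps)
      (metis mult_right_mono diff_ge_0_iff_ge mult.commute assms(2))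
  then have "-(x^2)/(2*\<sigma>^2) \<le> - (c^2)/(2*\<sigma>^2) + (- ((x-c)^2)/(2*\<sigma>^2))"
    using assms by (simp add: field_simps)
  then have "exp (-(x^2)/(2*\<sigma>^2)) \<le> exp (- (c^2) / (2*\<sigma>^2)) * exp (- ((x-c)^2)/(2*\<sigma>^2))"
    by (simp add: exp_add[symmetric])
  then show ?thesis unfolding normal_density_def
    by (simp add: divide_right_mono)
qed

lemma (in prob_space) normal_tail_bound:
  assumes D: "distributed M lborel Y (normal_density 0 \<sigma>)" and "\<sigma> > 0" "c \<ge> 0"
  shows "measure M {\<omega>\<in>space M. Y \<omega> \<ge> c} \<le> exp (- (c^2) / (2*\<sigma>^2))"
proof -
  let ?e = "exp (- (c^2) / (2*\<sigma>^2))"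
  have "emeasure M (Y -` {c..} \<inter> space M) = (\<integral>\<^sup>+x. ennreal (normal_density 0 \<sigma> x) * indicator {c..} x \<partial>lborel)"
    by (rule distributed_emeasure[OF D]) auto
  also have "\<dots> \<le> (\<integral>\<^sup>+x. ennreal (?e * normal_density c \<sigma> x) \<partial>lborel)"
    by (intro nn_integral_mono)
      (auto split: split_indicator intro!: ennreal_leI normal_density_le_shifted[OF assms(2,3), simplified])
  also have "\<dots> = ennreal (\<integral>x. ?e * normal_density c \<sigma> x \<partial>lborel)"
    by (rule nn_integral_eq_integral) (auto intro: integrable_normal_density[OF \<open>\<sigma> > 0\<close>])
  also have "(\<integral>x. ?e * normal_density c \<sigma> x \<partial>lborel) = ?e"
    using integral_normal_density[OF \<open>\<sigma> > 0\<close>] by simp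
  finally show ?thesis
    by (simp add: emeasure_eq_measure vimage_def Int_def conj_commute)
qed

lemma (in prob_space) distributed_normal_sign:
  assumes D: "distributed M lborel Y (normal_density 0 \<sigma>)" and "\<sigma> > 0"
    and "\<epsilon> = 1 \<or> \<epsilon> = (-1::real)"
  shows "distributed M lborel (\<lambda>x. \<epsilon> * Y x) (normal_density 0 \<sigma>)"
proof -
  have "distributed M lborel (\<lambda>x. 0 + \<epsilon> * Y x) (normal_density (0 + \<epsilon> * 0) (\<bar>\<epsilon>\<bar> * \<sigma>))"
    by (rule normal_density_affine[OF D \<open>\<sigma> > 0\<close>]) (use assms(3) in auto)
  then show ?thesis using assms(3) by auto
qed

lemma (in prob_space) normal_nonneg_prob:
  assumes D: "distributed M lborel Y (normal_density 0 \<sigma>)" and "\<sigma> > 0"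
  shows "measure M {\<omega>\<in>space M. Y \<omega> \<ge> 0} \<ge> 1/2"
proof -
  have D': "distributed M lborel (\<lambda>x. -1 * Y x) (normal_density 0 \<sigma>)"
    by (rule distributed_normal_sign[OF D \<open>\<sigma> > 0\<close>]) simp
  have "emeasure M (Y -` {0..} \<inter> space M) = (\<integral>\<^sup>+x. ennreal (normal_density 0 \<sigma> x) * indicator {0..} x \<partial>lborel)"
    by (rule distributed_emeasure[OF D]) auto
  also have "\<dots> = emeasure M ((\<lambda>x. -1 * Y x) -` {0..} \<inter> space M)"
    by (rule distributed_emeasure[OF D', symmetric]) auto
  finally have sym: "measure M (Y -` {0..} \<inter> space M) = measure M ((\<lambda>x. -1 * Y x) -` {0..} \<inter> space M)"
    by (simp add: emeasure_eq_measure)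
  have "Y \<in> borel_measurable M" using D by (simp add: distributed_def)
  then have "measure M (space M) \<le> measure M (Y -` {0..} \<inter> space M) + measure M ((\<lambda>x. -1 * Y x) -` {0..} \<inter> space M)"
    by (intro order.trans[OF finite_measure_mono measure_Un_le]) auto
  then have "1 \<le> 2 * measure M (Y -` {0..} \<inter> space M)" using sym prob_space by simp
  moreover have "{\<omega>\<in>space M. Y \<omega> \<ge> 0} = Y -` {0..} \<inter> space M" by auto
  ultimately show ?thesis by simp
qed

section \<open>Levy's maximal inequality along a discrete filtration\<close>

lemma first_passage_decomposition:
  fixes Y :: "nat \<Rightarrow> 'a \<Rightarrow> 'b::linorder"
  shows "{\<omega>\<in>S. \<exists>j\<le>n. c \<le> Y j \<omega>} = (\<Union>j\<le>n. {\<omega>\<in>S. c \<le> Y j \<omega> \<and> (\<forall>i<j. Y i \<omega> < c)})"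
proof (intro equalityI subsetI)
  fix \<omega> assume \<omega>: "\<omega> \<in> {\<omega>\<in>S. \<exists>j\<le>n. c \<le> Y j \<omega>}"
  then obtain j0 where j0: "j0 \<le> n" "c \<le> Y j0 \<omega>" by auto
  define j where "j = (LEAST j. c \<le> Y j \<omega>)"
  have "c \<le> Y j \<omega>" unfolding j_def by (rule LeastI[of _ j0]) (fact j0)
  moreover have "j \<le> j0" unfolding j_def by (rule Least_le) (fact j0)
  moreover have "\<forall>i<j. Y i \<omega> < c" unfolding j_def using not_less_Least by fastforce
  ultimately show "\<omega> \<in> (\<Union>j\<le>n. {\<omega>\<in>S. c \<le> Y j \<omega> \<and> (\<forall>i<j. Y i \<omega> < c)})" using \<omega> j0 by auto
qed auto

lemma first_passage_disjoint:
  fixes Y :: "nat \<Rightarrow> 'a \<Rightarrow> 'b::linorder"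
  shows "disjoint_family_on (\<lambda>j. {\<omega>\<in>S. c \<le> Y j \<omega> \<and> (\<forall>i<j. Y i \<omega> < c)}) A"
  unfolding disjoint_family_on_def by (auto, metis linorder_neqE_nat not_less)

lemma (in prob_space) discrete_levy_inequality:
  fixes Y :: "nat \<Rightarrow> 'a \<Rightarrow> real" and Fj :: "nat \<Rightarrow> 'a measure"
  assumes sub: "\<And>j. sets (Fj j) \<subseteq> sets M"
    and mono: "\<And>i j. i \<le> j \<Longrightarrow> sets (Fj i) \<subseteq> sets (Fj j)"
    and space: "\<And>j. space (Fj j) = space M"
    and meas: "\<And>j. j \<le> n \<Longrightarrow> Y j \<in> borel_measurable (Fj j)"
    and G: "G \<in> sets (Fj 0)"
    and median: "\<And>j A. j < n \<Longrightarrow> A \<in> sets (Fj j) \<Longrightarrow>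
                 measure M (A \<inter> {\<omega>\<in>space M. Y n \<omega> - Y j \<omega> \<ge> 0}) \<ge> measure M A / 2"
  shows "measure M (G \<inter> {\<omega>\<in>space M. \<exists>j\<le>n. Y j \<omega> \<ge> c}) \<le> 2 * measure M (G \<inter> {\<omega>\<in>space M. Y n \<omega> \<ge> c})"
proof -
  have measM: "Y j \<in> borel_measurable M" if "j \<le> n" for j
    using meas[OF that] sub[of j] by (auto simp: measurable_def space)
  define H where "H j = G \<inter> {\<omega>\<in>space M. Y j \<omega> \<ge> c \<and> (\<forall>i<j. Y i \<omega> < c)}" for j
  have HF: "H j \<in> sets (Fj j)" if "j \<le> n" for j
  proof -
    have m: "Y i \<in> borel_measurable (Fj j)" if "i \<le> j" for i
      using meas[of i] that \<open>j \<le> n\<close> mono[OF that] by (auto simp: measurable_def space)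
    have "{\<omega>\<in>space (Fj j). Y j \<omega> \<ge> c \<and> (\<forall>i<j. Y i \<omega> < c)} \<in> sets (Fj j)"
      using m by measurable
    moreover have "G \<in> sets (Fj j)" using G mono[of 0 j] by auto
    ultimately show ?thesis unfolding H_def by (auto simp: space)
  qed
  have HM: "H j \<in> sets M" if "j \<le> n" for j using HF[OF that] sub by auto
  have disj: "disjoint_family_on H {..n}"
    unfolding H_def by (rule disjoint_family_on_bisimulation[OF first_passage_disjoint[of "space M" c Y]]) blast
  have first_passage: "G \<inter> {\<omega>\<in>space M. \<exists>j\<le>n. Y j \<omega> \<ge> c} = (\<Union>j\<in>{..n}. H j)"
    unfolding H_def first_passage_decomposition by (rule Int_UN_distrib)
  define K where "K j = H j \<inter> {\<omega>\<in>space M. Y n \<omega> - Y j \<omega> \<ge> 0}" for j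
  have KM: "K j \<in> sets M" if "j \<le> n" for j
  proof -
    have [measurable]: "Y n \<in> borel_measurable M" "Y j \<in> borel_measurable M"
      using measM that by auto
    have "{\<omega>\<in>space M. Y n \<omega> - Y j \<omega> \<ge> 0} \<in> sets M" by measurable
    then show ?thesis unfolding K_def using HM[OF that] by auto
  qed
  have HK: "measure M (H j) \<le> 2 * measure M (K j)" if "j \<le> n" for j
  proof (cases "j < n")
    case True then show ?thesis using median[OF True HF[OF that]] unfolding K_def by simp
  next
    case False
    then have "K j = H j" using that unfolding K_def H_def by auto
    then show ?thesis by simp
  qed
  have disjK: "disjoint_family_on K {..n}"
    using disj unfolding disjoint_family_on_def K_def by blast
  have "measure M (G \<inter> {\<omega>\<in>space M. \<exists>j\<le>n. Y j \<omega> \<ge> c}) = (\<Sum>j\<le>n. measure M (H j))"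
    unfolding first_passage by (rule finite_measure_finite_Union) (use HM disj in auto)
  also have "\<dots> \<le> (\<Sum>j\<le>n. 2 * measure M (K j))" by (rule sum_mono) (use HK in auto)
  also have "\<dots> = 2 * measure M (\<Union>j\<in>{..n}. K j)"
    by (subst finite_measure_finite_Union) (use KM disjK in \<open>auto simp: sum_distrib_left\<close>)
  also have "\<dots> \<le> 2 * measure M (G \<inter> {\<omega>\<in>space M. Y n \<omega> \<ge> c})"
  proof -
    have "G \<inter> {\<omega>\<in>space M. Y n \<omega> \<ge> c} \<in> sets M"
      using G sub[of 0] measM[OF order.refl] by auto
    moreover have "(\<Union>j\<in>{..n}. K j) \<subseteq> G \<inter> {\<omega>\<in>space M. Y n \<omega> \<ge> c}"
      unfolding K_def H_def by auto
    ultimately show ?thesis by (simp add: finite_measure_mono)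
  qed
  finally show ?thesis .
qed

section \<open>Dyadic grids along continuous paths\<close>

lemma dyadic_below:
  fixes s \<eta> :: real
  assumes "0 \<le> s" "\<eta> > 0"
  shows "\<exists>j p::nat. real j / 2^p \<le> s \<and> s - real j / 2^p < \<eta>"
proof -
  obtain p :: nat where p: "1 / \<eta> < 2^p" using real_arch_pow[of 2 "1/\<eta>"] by auto
  define j where "j = nat \<lfloor>s * 2^p\<rfloor>"
  have "real j = of_int \<lfloor>s * 2^p\<rfloor>" unfolding j_def using assms by simp
  then have "real j \<le> s * 2^p" "s * 2^p < real j + 1" by linarith+
  moreover have "1 / 2^p < \<eta>" using p assms by (simp add: field_simps)
  ultimately have "real j / 2^p \<le> s" "s - real j / 2^p < \<eta>"
    by (simp_all add: field_simps)
  then show ?thesis by blast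
qed

lemma dyadic_above:
  fixes q :: real
  assumes "0 \<le> q"
  shows "\<exists>j::nat. q \<le> real j / 2^n \<and> real j / 2^n < q + 1 / 2^n"
proof -
  define j where "j = nat \<lceil>q * 2^n\<rceil>"
  have "real j = of_int \<lceil>q * 2^n\<rceil>" unfolding j_def using assms by simp
  then have "q * 2^n \<le> real j" "real j < q * 2^n + 1" by linarith+
  then show ?thesis by (intro exI[of _ j]) (simp add: field_simps)
qed

lemma dyadic_point_exceeds:
  fixes x :: "real \<Rightarrow> real"
  assumes x: "continuous_on {0..} x" and s: "s \<ge> 0" and a: "a < \<bar>x s\<bar>"
  shows "\<exists>j p::nat. real j / 2^p \<le> s \<and> a < \<bar>x (real j / 2^p)\<bar>"
proof -
  obtain \<eta> where \<eta>: "\<eta> > 0" and near: "\<And>r. r \<ge> 0 \<Longrightarrow> dist r s < \<eta> \<Longrightarrow> dist (x r) (x s) < \<bar>x s\<bar> - a"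
    using x s a unfolding continuous_on_iff by (metis atLeast_iff diff_gt_0_iff_gt)
  obtain j p where jp: "real j / 2^p \<le> s" "s - real j / 2^p < \<eta>"
    using dyadic_below[OF s \<eta>] by auto
  have "dist (x (real j / 2^p)) (x s) < \<bar>x s\<bar> - a"
    by (rule near) (use jp in \<open>auto simp: dist_real_def\<close>)
  then have "a < \<bar>x (real j / 2^p)\<bar>" unfolding dist_real_def by linarith
  then show ?thesis using jp(1) by blast
qed

lemma ereal_le_of_approx_from_below:
  fixes y :: ereal
  assumes "\<And>m::nat. ereal (l - 1 / real (Suc m)) \<le> y"
  shows "ereal l \<le> y"
proof (rule ereal_le_epsilon2)
  fix e :: real assume "0 < e"
  then obtain m where m: "inverse (real (Suc m)) < e" using reals_Archimedean by blast
  have "ereal l \<le> ereal (l - 1 / real (Suc m)) + ereal e" using m by (simp add: field_simps)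
  also have "\<dots> \<le> y + ereal e" by (rule add_right_mono[OF assms])
  finally show "ereal l \<le> y + ereal e" .
qed

text \<open>Only dyadic points enter, so that the corresponding event of a process is measurable.\<close>
definition dyadic_modulus_le :: "(real \<Rightarrow> real) \<Rightarrow> real \<Rightarrow> real \<Rightarrow> real \<Rightarrow> bool" where
  "dyadic_modulus_le x T h \<delta> \<longleftrightarrow>
     (\<forall>j p j' p' :: nat. real j / 2^p \<le> T \<longrightarrow> real j' / 2^p' \<le> T \<longrightarrow>
        \<bar>real j / 2^p - real j' / 2^p'\<bar> \<le> h \<longrightarrow> \<bar>x (real j / 2^p) - x (real j' / 2^p')\<bar> \<le> \<delta>)"

lemma dyadic_modulus_le_mono:
  "dyadic_modulus_le x T h \<delta> \<Longrightarrow> h' \<le> h \<Longrightarrow> dyadic_modulus_le x T h' \<delta>"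
  unfolding dyadic_modulus_le_def by force

lemma dyadic_modulus_le_exists:
  fixes x :: "real \<Rightarrow> real"
  assumes "continuous_on {0..T} x" "\<delta> > 0"
  shows "\<exists>m. dyadic_modulus_le x T (1 / 2^m) \<delta>"
proof -
  obtain d where d: "d > 0" and uc: "\<And>s t. s \<in> {0..T} \<Longrightarrow> t \<in> {0..T} \<Longrightarrow> dist t s < d \<Longrightarrow> dist (x t) (x s) < \<delta>"
    using compact_uniformly_continuous[OF assms(1) compact_Icc] assms(2)
    unfolding uniformly_continuous_on_def by metis
  obtain m where m: "(1/2::real)^m < d" using real_arch_pow_inv[of d "1/2"] d by auto
  have "dyadic_modulus_le x T (1 / 2^m) \<delta>"
    unfolding dyadic_modulus_le_def
  proof (intro allI impI)
    fix j p j' p' :: nat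
    assume "real j / 2^p \<le> T" "real j' / 2^p' \<le> T" "\<bar>real j / 2^p - real j' / 2^p'\<bar> \<le> 1 / 2^m"
    then have "dist (x (real j' / 2^p')) (x (real j / 2^p)) < \<delta>"
      using m by (intro uc) (auto simp: dist_real_def power_one_over abs_minus_commute)
    then show "\<bar>x (real j / 2^p) - x (real j' / 2^p')\<bar> \<le> \<delta>" by (simp add: dist_real_def abs_minus_commute)
  qed
  then show ?thesis ..
qed

definition first_grid_crossing :: "(real \<Rightarrow> real) \<Rightarrow> real \<Rightarrow> nat \<Rightarrow> nat \<Rightarrow> bool" where
  "first_grid_crossing x l n k \<longleftrightarrow>
     (\<forall>j\<le>k. \<bar>x (real j / 2^n)\<bar> < l) \<and> l \<le> \<bar>x (real (Suc k) / 2^n)\<bar>"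

lemma first_grid_crossing_unique:
  "first_grid_crossing x l n k \<Longrightarrow> first_grid_crossing x l n k' \<Longrightarrow> k = k'"
  unfolding first_grid_crossing_def by (metis linorder_neqE_nat not_less Suc_leI)

lemma first_grid_crossing_before:
  fixes x :: "real \<Rightarrow> real" and l T :: real and n j0 p0 :: nat
  defines "q \<equiv> real j0 / 2^p0"
  assumes x0: "x 0 = 0" and l: "l > 0" and osc: "dyadic_modulus_le x (T + 1) (1 / 2^n) (l / 8)"
    and qT: "q < T" and qx: "3 * l / 2 < \<bar>x q\<bar>"
  shows "\<exists>k. real (Suc k) / 2^n < q \<and> first_grid_crossing x l n k \<and> \<bar>x (real (Suc k) / 2^n)\<bar> < 9 * l / 8"
proof -
  have q0: "q \<ge> 0" by (simp add: q_def)
  have osc_q: "\<bar>x (real j / 2^n) - x q\<bar> \<le> l / 8"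
    if "real j / 2^n \<le> T + 1" "\<bar>real j / 2^n - q\<bar> \<le> 1 / 2^n" for j
    using osc that qT unfolding dyadic_modulus_le_def q_def by auto
  obtain j1 where j1: "q \<le> real j1 / 2^n" "real j1 / 2^n < q + 1 / 2^n"
    using dyadic_above[OF q0] by blast
  have "1 / 2^n \<le> (1::real)" by simp
  then have "\<bar>x (real j1 / 2^n) - x q\<bar> \<le> l / 8"
    using j1 qT by (intro osc_q) linarith+
  then have reach_j1: "l \<le> \<bar>x (real j1 / 2^n)\<bar>" using qx l by linarith
  define J where "J = (LEAST j. l \<le> \<bar>x (real j / 2^n)\<bar>)"
  have reach_J: "l \<le> \<bar>x (real J / 2^n)\<bar>" unfolding J_def by (rule LeastI[of _ j1]) (fact reach_j1)
  have below_J: "\<bar>x (real j / 2^n)\<bar> < l" if "j < J" for j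
    using not_less_Least[of j "\<lambda>j. l \<le> \<bar>x (real j / 2^n)\<bar>"] that unfolding J_def by simp
  have "J \<noteq> 0"
  proof
    assume "J = 0" then show False using reach_J x0 l by simp
  qed
  then obtain k where k: "J = Suc k" by (cases J) auto
  have crossing: "first_grid_crossing x l n k"
    unfolding first_grid_crossing_def using below_J reach_J k by auto
  have step: "real (Suc k) / 2^n = real k / 2^n + 1 / 2^n" by (simp add: add_divide_distrib)
  have kq: "real k / 2^n < q"
  proof (rule ccontr)
    assume "\<not> real k / 2^n < q"
    then have "real j1 / 2^n < real (Suc k) / 2^n" using j1(2) step by linarith
    then have "j1 < Suc k" by (simp add: divide_less_cancel)
    then show False using below_J[of j1] reach_j1 k by simp
  qed
  have Skq: "real (Suc k) / 2^n < q"
  proof (rule ccontr)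
    assume "\<not> real (Suc k) / 2^n < q"
    then have "\<bar>x (real k / 2^n) - x q\<bar> \<le> l / 8"
      using kq qT step by (intro osc_q) auto
    then show False using below_J[of k] k qx l by linarith
  qed
  have "real (Suc k) / 2^n \<le> T + 1" "real k / 2^n \<le> T + 1"
    "\<bar>real (Suc k) / 2^n - real k / 2^n\<bar> \<le> 1 / 2^n"
    using Skq kq qT step by auto
  then have "\<bar>x (real (Suc k) / 2^n) - x (real k / 2^n)\<bar> \<le> l / 8"
    using osc unfolding dyadic_modulus_le_def by blast
  then have "\<bar>x (real (Suc k) / 2^n)\<bar> < 9 * l / 8" using below_J[of k] k by linarith
  then show ?thesis using Skq crossing by blast
qed

lemma crossing_level_attained:
  fixes x :: "real \<Rightarrow> real"
  assumes x: "continuous_on {0..} x" and r: "r \<ge> 0"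
    and near: "\<And>\<epsilon>. \<epsilon> > 0 \<Longrightarrow> \<exists>t\<ge>0. t < r + \<epsilon> \<and> l \<le> \<bar>x t\<bar>"
  shows "\<exists>s\<in>{0..r}. l \<le> \<bar>x s\<bar>"
proof -
  define S where "S = {t. 0 \<le> t \<and> l \<le> \<bar>x t\<bar>}"
  have "S = {0..} \<inter> (\<lambda>t. \<bar>x t\<bar>) -` {l..}" unfolding S_def by auto
  then have closed: "closed S"
    by (simp only:) (rule continuous_closed_preimage, use x in \<open>auto intro!: continuous_intros\<close>)
  have nonempty: "S \<noteq> {}" using near[of 1] unfolding S_def by auto
  have bdd: "bdd_below S" unfolding S_def by (rule bdd_belowI[of _ 0]) auto
  have "Inf S \<in> S" by (rule closed_contains_Inf[OF nonempty bdd closed])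
  moreover have "Inf S \<le> r"
  proof (rule ccontr)
    assume "\<not> Inf S \<le> r"
    then obtain t where "t \<in> S" "t < r + (Inf S - r)" using near[of "Inf S - r"] unfolding S_def by auto
    then show False using cInf_lower[OF _ bdd, of t] by simp
  qed
  ultimately show ?thesis unfolding S_def by auto
qed

section \<open>Brownian motion\<close>

locale brownian_motion =
  fixes M :: "'a measure" and F :: "ennreal \<Rightarrow> 'a measure" and W :: "real \<Rightarrow> 'a \<Rightarrow> real"
  assumes brownian_motion: "brownian_motion_wrt M F W"
begin

sublocale prob_space M
  using brownian_motion unfolding brownian_motion_wrt_def by simp

sublocale filtration "space M" F
  using brownian_motion unfolding brownian_motion_wrt_def by simp

lemma sets_F_subset: "sets (F t) \<subseteq> sets M"
  using brownian_motion by (simp add: brownian_motion_wrt_def)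

lemma borel_measurable_F_subset: "f \<in> borel_measurable (F t) \<Longrightarrow> f \<in> borel_measurable M"
  using sets_F_subset[of t] by (auto simp: measurable_def space_F)

lemma borel_measurable_F_mono: "f \<in> borel_measurable (F s) \<Longrightarrow> s \<le> t \<Longrightarrow> f \<in> borel_measurable (F t)"
  using sets_F_mono[of s t] by (auto simp: measurable_def space_F)

lemma W_zero: "\<omega> \<in> space M \<Longrightarrow> W 0 \<omega> = 0"
  using brownian_motion by (simp add: brownian_motion_wrt_def)

lemma W_continuous: "\<omega> \<in> space M \<Longrightarrow> continuous_on {0..} (\<lambda>t. W t \<omega>)"
  using brownian_motion by (simp add: brownian_motion_wrt_def)

lemma W_measurable_F: "t \<ge> 0 \<Longrightarrow> W t \<in> borel_measurable (F (ennreal t))"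
  using brownian_motion by (simp add: brownian_motion_wrt_def)

lemma W_measurable: "t \<ge> 0 \<Longrightarrow> W t \<in> borel_measurable M"
  using W_measurable_F borel_measurable_F_subset by blast

lemma increment_distributed: "0 \<le> s \<Longrightarrow> s < t \<Longrightarrow>
   distributed M lborel (\<lambda>\<omega>. W t \<omega> - W s \<omega>) (normal_density 0 (sqrt (t - s)))"
  using brownian_motion by (simp add: brownian_motion_wrt_def)

lemma increment_indep: "0 \<le> s \<Longrightarrow> s < t \<Longrightarrow> A \<in> sets (F (ennreal s)) \<Longrightarrow> B \<in> sets borel \<Longrightarrow>
   measure M (A \<inter> ((\<lambda>\<omega>. W t \<omega> - W s \<omega>) -` B \<inter> space M)) =
     measure M A * measure M ((\<lambda>\<omega>. W t \<omega> - W s \<omega>) -` B \<inter> space M)"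
  using brownian_motion unfolding brownian_motion_wrt_def by blast

lemma signed_increment_indep:
  assumes "0 \<le> s" "s < t" "A \<in> sets (F (ennreal s))"
  shows "measure M (A \<inter> {\<omega>\<in>space M. \<epsilon> * (W t \<omega> - W s \<omega>) \<ge> c}) =
           measure M A * measure M {\<omega>\<in>space M. \<epsilon> * (W t \<omega> - W s \<omega>) \<ge> c}"
proof -
  have "{\<omega>\<in>space M. \<epsilon> * (W t \<omega> - W s \<omega>) \<ge> c} = (\<lambda>\<omega>. W t \<omega> - W s \<omega>) -` {x. \<epsilon> * x \<ge> c} \<inter> space M"
    by auto
  then show ?thesis by (simp only:) (rule increment_indep[OF assms], measurable)
qed

lemma signed_increment_nonneg_prob:
  assumes "0 \<le> s" "s < t" "\<epsilon> = 1 \<or> \<epsilon> = (-1::real)"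
  shows "measure M {\<omega>\<in>space M. \<epsilon> * (W t \<omega> - W s \<omega>) \<ge> 0} \<ge> 1/2"
  using assms
  by (intro normal_nonneg_prob[OF distributed_normal_sign[OF increment_distributed]]) auto

lemma signed_increment_tail:
  assumes "0 \<le> s" "s < t" "\<epsilon> = 1 \<or> \<epsilon> = (-1::real)" "c \<ge> 0"
  shows "measure M {\<omega>\<in>space M. \<epsilon> * (W t \<omega> - W s \<omega>) \<ge> c} \<le> exp (- (c^2) / (2 * (t - s)))"
proof -
  have "measure M {\<omega>\<in>space M. \<epsilon> * (W t \<omega> - W s \<omega>) \<ge> c} \<le> exp (- (c^2) / (2 * (sqrt (t - s))^2))"
    by (rule normal_tail_bound[OF distributed_normal_sign[OF increment_distributed[OF assms(1,2)] _ assms(3)]])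
      (use assms in auto)
  then show ?thesis using assms by simp
qed

lemma dyadic_increment_sets:
  fixes g :: "real \<Rightarrow> real"
  assumes "a \<ge> 0" "L > 0" and [measurable]: "g \<in> borel_measurable borel"
  shows "{\<omega>\<in>space M. \<exists>j\<le>(2::nat)^m. c \<le> g (W (a + real j * L / 2^m) \<omega> - W a \<omega>)} \<in> sets M"
proof -
  have [measurable]: "W (a + real j * L / 2^m) \<in> borel_measurable M" for j :: nat
    using W_measurable assms by simp
  have [measurable]: "W a \<in> borel_measurable M" using W_measurable assms by simp
  have "{\<omega>\<in>space M. c \<le> g (W (a + real j * L / 2^m) \<omega> - W a \<omega>)} \<in> sets M" for j :: nat
  proof -
    have "(\<lambda>\<omega>. g (W (a + real j * L / 2^m) \<omega> - W a \<omega>)) \<in> borel_measurable M" by measurable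
    from measurable_sets[OF this atLeast_borel[of c]] show ?thesis by (simp add: vimage_def Int_def conj_commute)
  qed
  moreover have "{\<omega>\<in>space M. \<exists>j\<le>(2::nat)^m. c \<le> g (W (a + real j * L / 2^m) \<omega> - W a \<omega>)}
     = (\<Union>j\<in>{..(2::nat)^m}. {\<omega>\<in>space M. c \<le> g (W (a + real j * L / 2^m) \<omega> - W a \<omega>)})"
    by auto
  ultimately show ?thesis by auto
qed

lemma dyadic_increments_tail:
  assumes a: "a \<ge> 0" and L: "L > 0" and \<epsilon>: "\<epsilon> = 1 \<or> \<epsilon> = (-1::real)" and c: "c \<ge> 0"
    and G: "G \<in> sets (F (ennreal a))"
  shows "measure M (G \<inter> {\<omega>\<in>space M. \<exists>j\<le>(2::nat)^m. \<epsilon> * (W (a + real j * L / 2^m) \<omega> - W a \<omega>) \<ge> c})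
         \<le> 2 * measure M G * exp (- (c^2) / (2 * L))"
proof -
  define t where "t j = a + real j * L / 2^m" for j :: nat
  have t_mono: "i \<le> j \<Longrightarrow> t i \<le> t j" for i j
    using L by (simp add: t_def divide_right_mono mult_right_mono)
  have t_less: "t j < a + L" if "j < 2^m" for j
  proof -
    have "real j < 2^m" using that by (metis of_nat_less_iff of_nat_numeral of_nat_power)
    then have "real j * L / 2^m < L" using L by (simp add: divide_less_eq mult.commute)
    then show ?thesis by (simp add: t_def)
  qed
  have t_nonneg: "t j \<ge> 0" for j using a L by (simp add: t_def)
  define Y where "Y j \<omega> = \<epsilon> * (W (t j) \<omega> - W a \<omega>)" for j \<omega>
  have "measure M (G \<inter> {\<omega>\<in>space M. \<exists>j\<le>(2::nat)^m. Y j \<omega> \<ge> c})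
      \<le> 2 * measure M (G \<inter> {\<omega>\<in>space M. Y (2^m) \<omega> \<ge> c})"
  proof (rule discrete_levy_inequality[where Fj = "\<lambda>j. F (ennreal (t j))"])
    show "sets (F (ennreal (t i))) \<subseteq> sets (F (ennreal (t j)))" if "i \<le> j" for i j
      using t_mono[OF that] by (intro sets_F_mono ennreal_leI)
    show "Y j \<in> borel_measurable (F (ennreal (t j)))" for j
    proof -
      have "ennreal a \<le> ennreal (t j)" using t_mono[of 0 j] by (intro ennreal_leI) (simp add: t_def)
      then have "W a \<in> borel_measurable (F (ennreal (t j)))"
        by (rule borel_measurable_F_mono[OF W_measurable_F[OF a]])
      then show ?thesis unfolding Y_def using W_measurable_F[OF t_nonneg[of j]] by measurable
    qed
    show "G \<in> sets (F (ennreal (t 0)))" using G by (simp add: t_def)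
    show "measure M (A \<inter> {\<omega>\<in>space M. Y (2^m) \<omega> - Y j \<omega> \<ge> 0}) \<ge> measure M A / 2"
      if j: "j < 2^m" and A: "A \<in> sets (F (ennreal (t j)))" for j A
    proof -
      have "{\<omega>\<in>space M. Y (2^m) \<omega> - Y j \<omega> \<ge> 0} = {\<omega>\<in>space M. \<epsilon> * (W (a + L) \<omega> - W (t j) \<omega>) \<ge> 0}"
        unfolding Y_def by (auto simp: t_def algebra_simps)
      moreover have "measure M A * (1/2) \<le> measure M A * measure M {\<omega>\<in>space M. \<epsilon> * (W (a + L) \<omega> - W (t j) \<omega>) \<ge> 0}"
        by (rule mult_left_mono[OF signed_increment_nonneg_prob[OF t_nonneg t_less[OF j] \<epsilon>]]) simp
      ultimately show ?thesis
        using signed_increment_indep[OF t_nonneg t_less[OF j] A] by simp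
    qed
  qed (auto simp: sets_F_subset space_F)
  also have "measure M (G \<inter> {\<omega>\<in>space M. Y (2^m) \<omega> \<ge> c})
      = measure M G * measure M {\<omega>\<in>space M. \<epsilon> * (W (a + L) \<omega> - W a \<omega>) \<ge> c}"
    unfolding Y_def t_def using signed_increment_indep[OF a _ G] L by simp
  also have "\<dots> \<le> measure M G * exp (- (c^2) / (2 * L))"
    using mult_left_mono[OF signed_increment_tail[OF a _ \<epsilon> c, of "a + L"]] L by simp
  finally show ?thesis unfolding Y_def t_def by simp
qed

text \<open>A measurable event containing every path that leaves the \<open>c\<close>-neighbourhood of \<open>W a\<close>
  during \<open>[a, a + L]\<close>; the threshold \<open>c / 2\<close> on the dyadic points leaves room for continuity.\<close>
definition excursion_event :: "real \<Rightarrow> real \<Rightarrow> real \<Rightarrow> 'a set" where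
  "excursion_event a L c =
     (\<Union>m. {\<omega>\<in>space M. \<exists>j\<le>(2::nat)^m. c/2 \<le> \<bar>W (a + real j * L / 2^m) \<omega> - W a \<omega>\<bar>})"

lemma excursion_event_sets:
  assumes "a \<ge> 0" "L > 0" shows "excursion_event a L c \<in> sets M"
proof -
  have "(\<lambda>x::real. \<bar>x\<bar>) \<in> borel_measurable borel" by measurable
  then show ?thesis unfolding excursion_event_def
    by (intro sets.countable_UN image_subsetI dyadic_increment_sets[OF assms])
qed

lemma increment_lt_outside_excursion:
  assumes \<omega>: "\<omega> \<in> space M" "\<omega> \<notin> excursion_event a L c"
    and a: "a \<ge> 0" and L: "L > 0" and c: "c > 0" and v: "0 \<le> v" "v \<le> L"
  shows "\<bar>W (a + v) \<omega> - W a \<omega>\<bar> < c"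
proof (rule ccontr)
  assume far: "\<not> \<bar>W (a + v) \<omega> - W a \<omega>\<bar> < c"
  have "continuous_on {0..L} (\<lambda>r. W (a + r) \<omega>)"
    using a by (intro continuous_on_compose2[OF W_continuous[OF \<omega>(1)]] continuous_intros) auto
  then obtain \<eta> where \<eta>: "\<eta> > 0"
    and near: "\<And>r. r \<in> {0..L} \<Longrightarrow> dist r v < \<eta> \<Longrightarrow> dist (W (a + r) \<omega>) (W (a + v) \<omega>) < c/2"
    using c v unfolding continuous_on_iff by (metis atLeastAtMost_iff half_gt_zero)
  obtain j p where jp: "real j / 2^p \<le> v / L" "v / L - real j / 2^p < \<eta> / L"
    using dyadic_below[of "v / L" "\<eta> / L"] L v \<eta> by auto
  have "v / L \<le> 1" using v L by simp
  then have "real j / 2^p \<le> 1" using jp(1) by linarith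
  then have "j \<le> 2^p" by (simp add: of_nat_le_iff[symmetric])
  have "L * (real j / 2^p) \<le> L * (v / L)" "L * (v / L - real j / 2^p) < L * (\<eta> / L)"
    using mult_left_mono[OF jp(1), of L] mult_strict_left_mono[OF jp(2) L] L by auto
  then have "real j * L / 2^p \<le> v" "v - real j * L / 2^p < \<eta>"
    using L by (simp_all add: right_diff_distrib mult.commute)
  then have r: "real j * L / 2^p \<in> {0..L}" "dist (real j * L / 2^p) v < \<eta>"
    using v L by (auto simp: dist_real_def)
  have "c/2 \<le> \<bar>W (a + real j * L / 2^p) \<omega> - W a \<omega>\<bar>"
    using near[OF r] far unfolding dist_real_def by linarith
  then have "\<omega> \<in> excursion_event a L c"
    unfolding excursion_event_def using \<omega>(1) \<open>j \<le> 2^p\<close> by blast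
  with \<omega>(2) show False by contradiction
qed

lemma excursion_event_prob:
  assumes a: "a \<ge> 0" and L: "L > 0" and c: "c \<ge> 0" and G: "G \<in> sets (F (ennreal a))"
  shows "measure M (G \<inter> excursion_event a L c) \<le> 4 * measure M G * exp (- (c^2) / (8 * L))"
proof -
  define U where "U m = G \<inter> {\<omega>\<in>space M. \<exists>j\<le>(2::nat)^m. c/2 \<le> \<bar>W (a + real j * L / 2^m) \<omega> - W a \<omega>\<bar>}" for m
  define V where "V \<epsilon> m = G \<inter> {\<omega>\<in>space M. \<exists>j\<le>(2::nat)^m. c/2 \<le> \<epsilon> * (W (a + real j * L / 2^m) \<omega> - W a \<omega>)}"
    for \<epsilon> :: real and m
  have GM: "G \<in> sets M" using G sets_F_subset by auto
  have "(\<lambda>x::real. \<bar>x\<bar>) \<in> borel_measurable borel" by measurable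
  then have UM: "U m \<in> sets M" for m
    unfolding U_def by (intro sets.Int GM dyadic_increment_sets[OF a L])
  have "(\<lambda>x::real. \<epsilon> * x) \<in> borel_measurable borel" for \<epsilon> by measurable
  then have VM: "V \<epsilon> m \<in> sets M" for \<epsilon> m
    unfolding V_def by (intro sets.Int GM dyadic_increment_sets[OF a L])
  have U_bound: "measure M (U m) \<le> 4 * measure M G * exp (- (c^2) / (8 * L))" for m
  proof -
    have "U m \<subseteq> V 1 m \<union> V (-1) m"
      unfolding U_def V_def by (auto simp: abs_real_def split: if_splits)
    then have "measure M (U m) \<le> measure M (V 1 m \<union> V (-1) m)"
      by (rule finite_measure_mono) (intro sets.Un VM)
    also have "\<dots> \<le> measure M (V 1 m) + measure M (V (-1) m)"
      by (rule measure_Un_le) (rule VM)+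
    also have "\<dots> \<le> 2 * measure M G * exp (- ((c/2)^2) / (2 * L)) + 2 * measure M G * exp (- ((c/2)^2) / (2 * L))"
      unfolding V_def using c by (intro add_mono dyadic_increments_tail[OF a L _ _ G]) auto
    also have "- ((c/2)^2) / (2 * L) = - (c^2) / (8 * L)" by (simp add: power2_eq_square field_simps)
    finally show ?thesis by simp
  qed
  have "incseq U"
  proof (rule incseq_SucI, rule subsetI)
    fix m \<omega> assume "\<omega> \<in> U m"
    then obtain j where "j \<le> 2^m" "c/2 \<le> \<bar>W (a + real j * L / 2^m) \<omega> - W a \<omega>\<bar>" "\<omega> \<in> G" "\<omega> \<in> space M"
      unfolding U_def by auto
    moreover have "real (2*j) * L / 2^Suc m = real j * L / 2^m" by simp
    ultimately show "\<omega> \<in> U (Suc m)" unfolding U_def by (auto intro!: exI[of _ "2*j"])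
  qed
  then have "(\<lambda>m. measure M (U m)) \<longlonglongrightarrow> measure M (\<Union>m. U m)"
    by (intro finite_Lim_measure_incseq) (use UM in auto)
  then have "measure M (\<Union>m. U m) \<le> 4 * measure M G * exp (- (c^2) / (8 * L))"
    by (rule LIMSEQ_le_const2) (use U_bound in auto)
  moreover have "G \<inter> excursion_event a L c = (\<Union>m. U m)"
    unfolding U_def excursion_event_def by (rule Int_UN_distrib)
  ultimately show ?thesis by simp
qed

end

section \<open>Pathwise estimates for the integral equation\<close>

lemma damped_ode_bound:
  fixes q g :: "real \<Rightarrow> real"
  assumes \<alpha>: "\<alpha> > 0" and t: "t0 \<le> t" and D: "D \<ge> 0" and q0: "q t0 = 0"
    and cont: "continuous_on {t0..t} q"
    and deriv: "\<And>r. t0 < r \<Longrightarrow> r < t \<Longrightarrow> (q has_real_derivative g r - \<alpha> * q r) (at r)"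
    and g: "\<And>r. t0 < r \<Longrightarrow> r < t \<Longrightarrow> \<bar>g r\<bar> \<le> D"
  shows "\<bar>q t\<bar> \<le> D / \<alpha>"
proof -
  define E where "E r = exp (\<alpha> * (r - t0))" for r
  \<comment> \<open>\<open>E\<close> is an integrating factor: \<open>(E q)' = E g\<close> and \<open>\<bar>E g\<bar> \<le> D E = (D (E - 1) / \<alpha>)'\<close>\<close>
  define h where "h s r = D * (E r - 1) / \<alpha> - s * (E r * q r)" for s r
  have h_mono: "h s t0 \<le> h s t" if s: "s = 1 \<or> s = -1" for s
  proof (rule DERIV_nonneg_imp_increasing_open[OF t])
    fix r assume r: "t0 < r" "r < t"
    have "(h s has_real_derivative E r * (D - s * g r)) (at r)"
      unfolding h_def E_def using \<alpha>
      by (auto intro!: derivative_eq_intros deriv[OF r] simp: field_simps)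
    moreover have "0 \<le> E r * (D - s * g r)"
      using g[OF r] s by (auto simp: E_def abs_le_iff)
    ultimately show "\<exists>y. DERIV (h s) r :> y \<and> 0 \<le> y" by blast
  next
    show "continuous_on {t0..t} (h s)" unfolding h_def E_def using \<alpha> by (intro continuous_intros cont) auto
  qed
  have "E t * q t \<le> D * (E t - 1) / \<alpha>" "- (E t * q t) \<le> D * (E t - 1) / \<alpha>"
    using h_mono[of 1] h_mono[of "-1"] q0 unfolding h_def by (simp_all add: E_def)
  then have "\<bar>E t * q t\<bar> \<le> D * (E t - 1) / \<alpha>" by (simp only: abs_le_iff)
  then have "E t * \<bar>q t\<bar> \<le> D * (E t - 1) / \<alpha>" by (simp add: abs_mult E_def)
  also have "\<dots> \<le> E t * (D / \<alpha>)"
    using D \<alpha> by (simp add: divide_right_mono field_simps)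
  finally show ?thesis
    by (rule mult_left_le_imp_le) (simp add: E_def)
qed

lemma ou_increment_bound:
  fixes x w :: "real \<Rightarrow> real"
  assumes \<alpha>: "\<alpha> > 0" and cx: "continuous_on {0..} x"
    and eq: "\<And>t. t \<ge> 0 \<Longrightarrow> x t = w t - \<alpha> * integral {0..t} x"
    and t: "0 \<le> t0" "t0 \<le> t"
    and D: "\<And>r. t0 \<le> r \<Longrightarrow> r \<le> t \<Longrightarrow> \<bar>w r - w t0\<bar> \<le> D"
  shows "\<bar>x t - x t0 * exp (- \<alpha> * (t - t0))\<bar> \<le> 2 * D"
proof -
  define Y where "Y r = integral {0..r} x" for r
  \<comment> \<open>the integral over \<open>[t0, r]\<close> of the deviation of \<open>x\<close> from free exponential decay\<close>
  define q where "q r = Y r - Y t0 - x t0 * (1 - exp (-\<alpha> * (r - t0))) / \<alpha>" for r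
  have key: "x r - x t0 * exp (-\<alpha> * (r - t0)) = (w r - w t0) - \<alpha> * q r" if "r \<ge> 0" for r
    using eq[OF that] eq[OF t(1)] \<alpha> unfolding q_def Y_def by (simp add: field_simps) (metis distrib_left)
  have Y_deriv: "(Y has_real_derivative x r) (at r)" if "0 < r" for r
  proof -
    have "(Y has_real_derivative x r) (at r within {0..r+1})"
      unfolding Y_def by (rule integral_has_real_derivative) (use continuous_on_subset[OF cx] that in auto)
    then show ?thesis using at_within_Icc_at[of 0 r "r+1"] that by simp
  qed
  have "continuous_on {0..t} Y" unfolding Y_def
    by (intro indefinite_integral_continuous_1 integrable_continuous_interval continuous_on_subset[OF cx]) auto
  then have "continuous_on {t0..t} Y" by (rule continuous_on_subset) (use t in auto)
  have D0: "D \<ge> 0" using D[of t0] t by (meson abs_ge_zero order.trans order_refl)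
  have "\<bar>q t\<bar> \<le> D / \<alpha>"
  proof (rule damped_ode_bound[OF \<alpha> t(2) D0, where g = "\<lambda>r. w r - w t0"])
    show "continuous_on {t0..t} q" unfolding q_def
      by (intro continuous_intros \<open>continuous_on {t0..t} Y\<close>) (use \<alpha> in auto)
    fix r assume r: "t0 < r" "r < t"
    have "(q has_real_derivative x r - x t0 * exp (-\<alpha> * (r - t0))) (at r)"
      unfolding q_def using r t \<alpha>
      by (auto intro!: derivative_eq_intros Y_deriv simp: field_simps)
    then show "(q has_real_derivative (w r - w t0) - \<alpha> * q r) (at r)"
      using key[of r] r t by simp
    show "\<bar>w r - w t0\<bar> \<le> D" using D r by simp
  qed (simp add: q_def)
  have "\<bar>x t - x t0 * exp (- \<alpha> * (t - t0))\<bar> \<le> \<bar>w t - w t0\<bar> + \<alpha> * \<bar>q t\<bar>"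
    using key[of t] t \<alpha> abs_triangle_ineq4[of "w t - w t0" "\<alpha> * q t"] by (simp add: abs_mult)
  also have "\<dots> \<le> D + \<alpha> * (D / \<alpha>)"
    using D[of t] t \<open>\<bar>q t\<bar> \<le> D / \<alpha>\<close> \<alpha> by (intro add_mono mult_left_mono) auto
  finally show ?thesis using \<alpha> by simp
qed

lemma halving_recursion_bound:
  fixes u :: "nat \<Rightarrow> real"
  assumes "c \<ge> 0" and step: "\<And>i. i < N \<Longrightarrow> \<bar>u (Suc i)\<bar> \<le> \<bar>u i\<bar> / 2 + 2 * c"
  shows "i \<le> N \<Longrightarrow> \<bar>u i\<bar> \<le> \<bar>u 0\<bar> + 4 * c"
proof (induction i)
  case 0
  show ?case using \<open>c \<ge> 0\<close> by simp
next
  case (Suc i)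
  then show ?case using step[of i] \<open>c \<ge> 0\<close> by simp
qed

lemma block_containing:
  fixes h t0 t :: real
  assumes "h > 0" "N > 0" "t0 \<le> t" "t \<le> t0 + real N * h"
  obtains i where "i < N" "t0 + real i * h \<le> t" "t \<le> t0 + real i * h + h"
proof -
  define i where "i = min (N - 1) (nat \<lfloor>(t - t0) / h\<rfloor>)"
  have f: "0 \<le> (t - t0) / h" "(t - t0) / h \<le> real N" using assms by (simp_all add: field_simps)
  have "real i \<le> (t - t0) / h" unfolding i_def using f by linarith
  moreover have "(t - t0) / h \<le> real i + 1" unfolding i_def using f assms(2) by (auto simp: min_def)
  ultimately have "t0 + real i * h \<le> t" "t \<le> t0 + real i * h + h"
    using assms(1) by (simp_all add: field_simps)
  moreover have "i < N" using assms(2) by (simp add: i_def)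
  ultimately show ?thesis using that by blast
qed

text \<open>Across each block of length \<open>1/\<alpha>\<close> the drift contracts by \<open>e\<^sup>-\<^sup>1 \<le> 1/2\<close>, which keeps the
  accumulated noise bounded independently of the number of blocks.\<close>
lemma ou_growth_bound:
  fixes x w :: "real \<Rightarrow> real"
  assumes \<alpha>: "\<alpha> > 0" and cx: "continuous_on {0..} x"
    and eq: "\<And>t. t \<ge> 0 \<Longrightarrow> x t = w t - \<alpha> * integral {0..t} x"
    and t0: "0 \<le> t0" and c: "c \<ge> 0"
    and small: "\<And>i r. i < N \<Longrightarrow> t0 + real i / \<alpha> \<le> r \<Longrightarrow> r \<le> t0 + real i / \<alpha> + 1 / \<alpha> \<Longrightarrow>
              \<bar>w r - w (t0 + real i / \<alpha>)\<bar> \<le> c"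
    and t: "t0 \<le> t" "t \<le> t0 + real N / \<alpha>"
  shows "\<bar>x t\<bar> \<le> \<bar>x t0\<bar> + 6 * c"
proof (cases "N = 0")
  case True
  then show ?thesis using t c by simp
next
  case False
  define a where "a i = t0 + real i * (1 / \<alpha>)" for i :: nat
  have block: "\<bar>x r\<bar> \<le> \<bar>x (a i)\<bar> * exp (- \<alpha> * (r - a i)) + 2 * c"
    if "i < N" "a i \<le> r" "r \<le> a i + 1 / \<alpha>" for i r
  proof -
    have "\<bar>x r - x (a i) * exp (- \<alpha> * (r - a i))\<bar> \<le> 2 * c"
      by (rule ou_increment_bound[OF \<alpha> cx eq]) (use small[OF that(1)] that t0 \<alpha> in \<open>auto simp: a_def\<close>)
    then show ?thesis
      using abs_triangle_ineq2[of "x r" "x (a i) * exp (- \<alpha> * (r - a i))"] by (simp add: abs_mult)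
  qed
  have "exp (1::real) \<ge> 2" using exp_ge_add_one_self[of 1] by simp
  then have e: "exp (-1::real) \<le> 1/2" by (simp add: exp_minus field_simps)
  have "\<bar>x (a (Suc i))\<bar> \<le> \<bar>x (a i)\<bar> / 2 + 2 * c" if "i < N" for i
  proof -
    have "exp (- \<alpha> * (a (Suc i) - a i)) = exp (-1)" using \<alpha> by (simp add: a_def field_simps)
    then show ?thesis
      using block[OF that, of "a (Suc i)"] mult_left_mono[OF e, of "\<bar>x (a i)\<bar>"] \<alpha>
      by (simp add: a_def field_simps)
  qed
  then have endpoints: "\<bar>x (a i)\<bar> \<le> \<bar>x (a 0)\<bar> + 4 * c" if "i \<le> N" for i
    by (rule halving_recursion_bound[OF c _ that])
  obtain i where i: "i < N" "a i \<le> t" "t \<le> a i + 1 / \<alpha>"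
    using block_containing[of "1 / \<alpha>" N t0 t] \<alpha> False t unfolding a_def by auto
  have "exp (- \<alpha> * (t - a i)) \<le> 1" using i(2) \<alpha> by simp
  then have "\<bar>x t\<bar> \<le> \<bar>x (a i)\<bar> + 2 * c"
    using block[OF i] mult_left_le[of "exp (- \<alpha> * (t - a i))" "\<bar>x (a i)\<bar>"] by linarith
  then show ?thesis using endpoints[of i] i(1) by (simp add: a_def)
qed

section \<open>The Ornstein--Uhlenbeck process\<close>

lemma (in finite_measure) measure_le_mult_of_monotone_approximations:
  assumes A: "A \<subseteq> (\<Union>m. U m)" and U: "range U \<subseteq> sets M" "incseq U"
    and D: "range D \<subseteq> sets M" and R: "R \<in> sets M" "(\<Inter>n. \<Union>n'\<in>{n..}. D n') \<subseteq> R" and p: "p \<ge> 0"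
    and bound: "\<And>m n. m \<le> n \<Longrightarrow> measure M (U m) \<le> p * measure M (D n)"
  shows "measure M A \<le> p * measure M R"
proof -
  define T where "T n = (\<Union>n'\<in>{n..}. D n')" for n
  have T: "range T \<subseteq> sets M" "decseq T"
    using D unfolding T_def decseq_def by (auto, meson atLeast_iff order.trans)
  have "measure M (U m) \<le> p * measure M (\<Inter>n. T n)" for m
  proof (rule LIMSEQ_le_const)
    show "(\<lambda>n. p * measure M (T n)) \<longlonglongrightarrow> p * measure M (\<Inter>n. T n)"
      by (intro tendsto_mult tendsto_const finite_Lim_measure_decseq T)
    have "measure M (U m) \<le> p * measure M (T n)" if "m \<le> n" for n
      using bound[OF that] mult_left_mono[OF finite_measure_mono p, of "D n" "T n"] T(1)
      unfolding T_def by fastforce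
    then show "\<exists>N. \<forall>n\<ge>N. measure M (U m) \<le> p * measure M (T n)" by blast
  qed
  then have "measure M (\<Union>m. U m) \<le> p * measure M (\<Inter>n. T n)"
    by (intro LIMSEQ_le_const2[OF finite_Lim_measure_incseq[OF U]]) auto
  moreover have "measure M A \<le> measure M (\<Union>m. U m)"
    using A U(1) by (intro finite_measure_mono) auto
  moreover have "measure M (\<Inter>n. T n) \<le> measure M R"
    using R unfolding T_def by (intro finite_measure_mono) auto
  ultimately show ?thesis using p by (meson mult_left_mono order.trans)
qed

locale ornstein_uhlenbeck = brownian_motion +
  fixes \<alpha> :: real and X :: "real \<Rightarrow> 'a \<Rightarrow> real"
  assumes alpha_pos: "\<alpha> > 0" and solution: "OU_solution M F \<alpha> W X"
begin

lemma X_continuous: "\<omega> \<in> space M \<Longrightarrow> continuous_on {0..} (\<lambda>t. X t \<omega>)"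
  using solution by (simp add: OU_solution_def)

lemma X_integral_eq: "\<omega> \<in> space M \<Longrightarrow> t \<ge> 0 \<Longrightarrow> X t \<omega> = W t \<omega> - \<alpha> * integral {0..t} (\<lambda>s. X s \<omega>)"
  using solution by (simp add: OU_solution_def)

lemma X_zero: "\<omega> \<in> space M \<Longrightarrow> X 0 \<omega> = 0"
  using X_integral_eq[of \<omega> 0] W_zero by simp

lemma X_measurable_F: "t \<ge> 0 \<Longrightarrow> X t \<in> borel_measurable (F (ennreal t))"
  using solution by (simp add: OU_solution_def)

lemma X_dyadic_measurable [measurable]: "X (real j / 2^p) \<in> borel_measurable M"
  using borel_measurable_F_subset[OF X_measurable_F[of "real j / 2^p"]] by simp

lemma run_max_ge_iff:
  assumes \<omega>: "\<omega> \<in> space M"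
  shows "ereal l \<le> run_max X \<tau> \<omega> \<longleftrightarrow>
    (\<forall>m::nat. \<exists>j p::nat. ennreal (real j / 2^p) \<le> \<tau> \<omega> \<and> l - 1 / real (Suc m) < \<bar>X (real j / 2^p) \<omega>\<bar>)"
proof
  assume l: "ereal l \<le> run_max X \<tau> \<omega>"
  show "\<forall>m::nat. \<exists>j p::nat. ennreal (real j / 2^p) \<le> \<tau> \<omega> \<and> l - 1 / real (Suc m) < \<bar>X (real j / 2^p) \<omega>\<bar>"
  proof
    fix m :: nat
    have "ereal (l - 1 / real (Suc m)) < run_max X \<tau> \<omega>" using l by (rule less_le_trans[rotated]) simp
    then obtain s where s: "0 \<le> s" "ennreal s \<le> \<tau> \<omega>" "l - 1 / real (Suc m) < \<bar>X s \<omega>\<bar>"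
      unfolding run_max_def less_SUP_iff by auto
    obtain j p where "real j / 2^p \<le> s" "l - 1 / real (Suc m) < \<bar>X (real j / 2^p) \<omega>\<bar>"
      using dyadic_point_exceeds[OF X_continuous[OF \<omega>] s(1,3)] by blast
    with s(2) show "\<exists>j p::nat. ennreal (real j / 2^p) \<le> \<tau> \<omega> \<and> l - 1 / real (Suc m) < \<bar>X (real j / 2^p) \<omega>\<bar>"
      by (meson ennreal_leI order.trans)
  qed
next
  assume H: "\<forall>m::nat. \<exists>j p::nat. ennreal (real j / 2^p) \<le> \<tau> \<omega> \<and> l - 1 / real (Suc m) < \<bar>X (real j / 2^p) \<omega>\<bar>"
  show "ereal l \<le> run_max X \<tau> \<omega>"
  proof (rule ereal_le_of_approx_from_below)
    fix m :: nat
    obtain j p where jp: "ennreal (real j / 2^p) \<le> \<tau> \<omega>" "l - 1 / real (Suc m) < \<bar>X (real j / 2^p) \<omega>\<bar>"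
      using H by blast
    have "ereal (l - 1 / real (Suc m)) \<le> ereal \<bar>X (real j / 2^p) \<omega>\<bar>" using jp(2) by simp
    also have "\<dots> \<le> run_max X \<tau> \<omega>" unfolding run_max_def
      by (rule SUP_upper) (use jp(1) in auto)
    finally show "ereal (l - 1 / real (Suc m)) \<le> run_max X \<tau> \<omega>" .
  qed
qed

lemma run_max_ge_sets:
  assumes [measurable]: "\<tau> \<in> borel_measurable M"
  shows "{\<omega>\<in>space M. ereal l \<le> run_max X \<tau> \<omega>} \<in> sets M"
proof -
  have "{\<omega>\<in>space M. ereal l \<le> run_max X \<tau> \<omega>} = {\<omega>\<in>space M. \<forall>m::nat. \<exists>j p::nat.
      ennreal (real j / 2^p) \<le> \<tau> \<omega> \<and> l - 1 / real (Suc m) < \<bar>X (real j / 2^p) \<omega>\<bar>}"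
    using run_max_ge_iff by blast
  also have "\<dots> \<in> sets M" by measurable
  finally show ?thesis .
qed

definition crossing_event :: "real \<Rightarrow> ('a \<Rightarrow> ennreal) \<Rightarrow> nat \<Rightarrow> nat \<Rightarrow> 'a set" where
  "crossing_event l \<tau> n k =
     {\<omega>\<in>space M. first_grid_crossing (\<lambda>t. X t \<omega>) l n k \<and> ennreal (real k / 2^n) < \<tau> \<omega>}"

definition modulus_event :: "real \<Rightarrow> real \<Rightarrow> nat \<Rightarrow> 'a set" where
  "modulus_event T \<delta> m = {\<omega>\<in>space M. dyadic_modulus_le (\<lambda>t. X t \<omega>) T (1 / 2^m) \<delta>}"

definition dyadic_exceedance_event :: "('a \<Rightarrow> ennreal) \<Rightarrow> real \<Rightarrow> real \<Rightarrow> 'a set" where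
  "dyadic_exceedance_event \<tau> T a = {\<omega>\<in>space M. \<tau> \<omega> < ennreal T \<and>
     (\<exists>j p::nat. ennreal (real j / 2^p) \<le> \<tau> \<omega> \<and> a < \<bar>X (real j / 2^p) \<omega>\<bar>)}"

lemma modulus_event_sets: "modulus_event T \<delta> m \<in> sets M"
  unfolding modulus_event_def dyadic_modulus_le_def by measurable

lemma dyadic_exceedance_event_sets:
  assumes [measurable]: "\<tau> \<in> borel_measurable M"
  shows "dyadic_exceedance_event \<tau> T a \<in> sets M"
  unfolding dyadic_exceedance_event_def by measurable

lemma crossing_event_sets_F:
  assumes \<tau>: "stopping_time F \<tau>"
  shows "crossing_event l \<tau> n k \<in> sets (F (ennreal (real (Suc k) / 2^n)))"
proof -
  define t where "t = ennreal (real (Suc k) / 2^n)"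
  have grid_le: "ennreal (real j / 2^n) \<le> t" if "j \<le> Suc k" for j
    unfolding t_def using that by (intro ennreal_leI divide_right_mono) auto
  then have [measurable]: "X (real j / 2^n) \<in> borel_measurable (F t)" if "j \<le> Suc k" for j
    using that grid_le by (intro borel_measurable_F_mono[OF X_measurable_F]) auto
  have "{\<omega>\<in>space M. \<bar>X (real j / 2^n) \<omega>\<bar> < l} \<in> sets (F t)" if "j \<le> Suc k" for j
    using that by (simp only: space_F[of t, symmetric]) measurable
  then have "(\<Inter>j\<in>{..k}. {\<omega>\<in>space M. \<bar>X (real j / 2^n) \<omega>\<bar> < l}) \<in> sets (F t)"
    by (intro sets.finite_INT) auto
  moreover have "{\<omega>\<in>space M. l \<le> \<bar>X (real (Suc k) / 2^n) \<omega>\<bar>} \<in> sets (F t)"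
    by (simp only: space_F[of t, symmetric]) measurable
  moreover have "{\<omega>\<in>space M. ennreal (real k / 2^n) < \<tau> \<omega>} \<in> sets (F t)"
    using stopping_timeD2[OF \<tau>, of "ennreal (real k / 2^n)"] sets_F_mono[OF grid_le[of k]]
    unfolding Measurable.pred_def by (auto simp: space_F)
  moreover have "crossing_event l \<tau> n k = (\<Inter>j\<in>{..k}. {\<omega>\<in>space M. \<bar>X (real j / 2^n) \<omega>\<bar> < l}) \<inter>
      {\<omega>\<in>space M. l \<le> \<bar>X (real (Suc k) / 2^n) \<omega>\<bar>} \<inter> {\<omega>\<in>space M. ennreal (real k / 2^n) < \<tau> \<omega>}"
    unfolding crossing_event_def first_grid_crossing_def by auto
  ultimately show ?thesis unfolding t_def[symmetric] by (simp only:) (intro sets.Int)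
qed

lemma exceedance_event_eq_dyadic:
  "{\<omega>\<in>space M. \<tau> \<omega> < ennreal T \<and> (\<exists>s\<ge>0. ennreal s \<le> \<tau> \<omega> \<and> a < \<bar>X s \<omega>\<bar>)} = dyadic_exceedance_event \<tau> T a"
proof (intro equalityI subsetI)
  fix \<omega> assume "\<omega> \<in> {\<omega>\<in>space M. \<tau> \<omega> < ennreal T \<and> (\<exists>s\<ge>0. ennreal s \<le> \<tau> \<omega> \<and> a < \<bar>X s \<omega>\<bar>)}"
  then obtain s where \<omega>: "\<omega> \<in> space M" "\<tau> \<omega> < ennreal T" and s: "0 \<le> s" "ennreal s \<le> \<tau> \<omega>" "a < \<bar>X s \<omega>\<bar>"
    by auto
  obtain j p where jp: "real j / 2^p \<le> s" "a < \<bar>X (real j / 2^p) \<omega>\<bar>"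
    using dyadic_point_exceeds[OF X_continuous[OF \<omega>(1)] s(1,3)] by blast
  have "ennreal (real j / 2^p) \<le> \<tau> \<omega>" using ennreal_leI[OF jp(1)] s(2) by (rule order.trans)
  then show "\<omega> \<in> dyadic_exceedance_event \<tau> T a"
    unfolding dyadic_exceedance_event_def using \<omega> jp(2) by blast
next
  fix \<omega> assume "\<omega> \<in> dyadic_exceedance_event \<tau> T a"
  then obtain j p where "\<omega> \<in> space M" "\<tau> \<omega> < ennreal T" "ennreal (real j / 2^p) \<le> \<tau> \<omega>"
    "a < \<bar>X (real j / 2^p) \<omega>\<bar>"
    unfolding dyadic_exceedance_event_def by blast
  then show "\<omega> \<in> {\<omega>\<in>space M. \<tau> \<omega> < ennreal T \<and> (\<exists>s\<ge>0. ennreal s \<le> \<tau> \<omega> \<and> a < \<bar>X s \<omega>\<bar>)}"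
    by (intro CollectI conjI exI[of _ "real j / 2^p"]) auto
qed

lemma modulus_events_cover:
  assumes "\<delta> > 0" shows "space M = (\<Union>m. modulus_event T \<delta> m)"
proof (intro equalityI subsetI)
  fix \<omega> assume "\<omega> \<in> space M"
  then obtain m where "dyadic_modulus_le (\<lambda>t. X t \<omega>) T (1 / 2^m) \<delta>"
    using dyadic_modulus_le_exists[OF continuous_on_subset[OF X_continuous] assms] by fastforce
  then show "\<omega> \<in> (\<Union>m. modulus_event T \<delta> m)" unfolding modulus_event_def using \<open>\<omega> \<in> space M\<close> by blast
qed (auto simp: modulus_event_def)

lemma crossing_then_rise:
  assumes \<omega>: "\<omega> \<in> dyadic_exceedance_event \<tau> T (3 * l / 2) \<inter> modulus_event (T + 1) (l / 8) m"
    and "m \<le> n" "l > 0"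
  shows "\<exists>k < nat \<lceil>T * 2^n\<rceil>. \<omega> \<in> crossing_event l \<tau> n k \<and>
           (\<exists>t. real (Suc k) / 2^n \<le> t \<and> t \<le> real (Suc k) / 2^n + T \<and>
              \<bar>X (real (Suc k) / 2^n) \<omega>\<bar> + 3 * l / 8 < \<bar>X t \<omega>\<bar>)"
proof -
  obtain j0 p0 where \<omega>M: "\<omega> \<in> space M" and \<tau>T: "\<tau> \<omega> < ennreal T"
    and q\<tau>: "ennreal (real j0 / 2^p0) \<le> \<tau> \<omega>" and qx: "3 * l / 2 < \<bar>X (real j0 / 2^p0) \<omega>\<bar>"
    using \<omega> unfolding dyadic_exceedance_event_def by auto
  have "ennreal (real j0 / 2^p0) < ennreal T" using q\<tau> \<tau>T by (rule le_less_trans)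
  then have qT: "real j0 / 2^p0 < T" by (simp add: ennreal_less_iff)
  have "(1::real) / 2^n \<le> 1 / 2^m" using \<open>m \<le> n\<close> by (simp add: field_simps power_increasing)
  then have "dyadic_modulus_le (\<lambda>t. X t \<omega>) (T + 1) (1 / 2^n) (l / 8)"
    using \<omega> unfolding modulus_event_def by (auto intro: dyadic_modulus_le_mono)
  then obtain k where k: "real (Suc k) / 2^n < real j0 / 2^p0" "first_grid_crossing (\<lambda>t. X t \<omega>) l n k"
      "\<bar>X (real (Suc k) / 2^n) \<omega>\<bar> < 9 * l / 8"
    using first_grid_crossing_before[OF X_zero[OF \<omega>M] \<open>l > 0\<close> _ qT qx] by blast
  have "real k / 2^n < real (Suc k) / 2^n" by (simp add: divide_strict_right_mono)
  then have k_less: "real k / 2^n < real j0 / 2^p0" using k(1) by linarith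
  then have "real k / 2^n < T" using qT by linarith
  then have "real k < T * 2^n" by (simp add: field_simps)
  then have "k < nat \<lceil>T * 2^n\<rceil>" by linarith
  moreover have "ennreal (real k / 2^n) < \<tau> \<omega>"
  proof -
    have "0 \<le> real k / 2^n" by simp
    then have "ennreal (real k / 2^n) < ennreal (real j0 / 2^p0)"
      using k_less by (intro ennreal_lessI) linarith+
    then show ?thesis using q\<tau> by (rule less_le_trans)
  qed
  then have "\<omega> \<in> crossing_event l \<tau> n k" unfolding crossing_event_def using \<omega>M k(2) by simp
  moreover have "\<bar>X (real (Suc k) / 2^n) \<omega>\<bar> + 3 * l / 8 < \<bar>X (real j0 / 2^p0) \<omega>\<bar>"
    using k(3) qx by linarith
  moreover have "real j0 / 2^p0 \<le> real (Suc k) / 2^n + T"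
  proof -
    have "0 \<le> real (Suc k) / 2^n" by simp
    then show ?thesis using qT by linarith
  qed
  ultimately show ?thesis using k(1) by (intro exI[of _ k] conjI exI[of _ "real j0 / 2^p0"]) auto
qed

lemma limsup_crossing_events_subset:
  "(\<Inter>n. \<Union>n'\<in>{n..}. \<Union>k. crossing_event l \<tau> n' k) \<subseteq> {\<omega>\<in>space M. ereal l \<le> run_max X \<tau> \<omega>}"
proof
  fix \<omega> assume \<omega>: "\<omega> \<in> (\<Inter>n. \<Union>n'\<in>{n..}. \<Union>k. crossing_event l \<tau> n' k)"
  then have hit: "\<exists>n'\<ge>n. \<exists>k. \<omega> \<in> crossing_event l \<tau> n' k" for n by blast
  then obtain n0 k0 where "\<omega> \<in> crossing_event l \<tau> n0 k0" by blast
  then have \<omega>M: "\<omega> \<in> space M" and l0: "l \<le> \<bar>X (real (Suc k0) / 2^n0) \<omega>\<bar>"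
    unfolding crossing_event_def first_grid_crossing_def by auto
  have "\<exists>s. 0 \<le> s \<and> ennreal s \<le> \<tau> \<omega> \<and> l \<le> \<bar>X s \<omega>\<bar>"
  proof (cases "\<tau> \<omega>")
    case top
    then show ?thesis using l0 by (intro exI[of _ "real (Suc k0) / 2^n0"]) auto
  next
    case (real r)
    have "\<exists>t\<ge>0. t < r + \<epsilon> \<and> l \<le> \<bar>X t \<omega>\<bar>" if \<epsilon>: "\<epsilon> > 0" for \<epsilon>
    proof -
      obtain n where n: "(1/2::real)^n < \<epsilon>" using real_arch_pow_inv[of \<epsilon> "1/2"] \<epsilon> by auto
      obtain n' k where n': "n' \<ge> n" "\<omega> \<in> crossing_event l \<tau> n' k" using hit[of n] by blast
      then have "ennreal (real k / 2^n') < ennreal r" using real unfolding crossing_event_def by auto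
      then have "real k / 2^n' < r" by (simp add: ennreal_less_iff)
      moreover have "(1/2::real)^n' \<le> (1/2)^n" using n'(1) by (simp add: power_decreasing)
      ultimately have "real (Suc k) / 2^n' < r + \<epsilon>"
        using n by (simp add: add_divide_distrib power_one_over)
      moreover have "l \<le> \<bar>X (real (Suc k) / 2^n') \<omega>\<bar>"
        using n'(2) unfolding crossing_event_def first_grid_crossing_def by auto
      ultimately show ?thesis by (intro exI[of _ "real (Suc k) / 2^n'"]) auto
    qed
    then obtain s where "s \<in> {0..r}" "l \<le> \<bar>X s \<omega>\<bar>"
      using crossing_level_attained[OF X_continuous[OF \<omega>M] \<open>0 \<le> r\<close>] by blast
    then show ?thesis using real by (auto intro: ennreal_leI)
  qed
  then have "ereal l \<le> run_max X \<tau> \<omega>"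
    unfolding run_max_def by (auto intro: SUP_upper2)
  then show "\<omega> \<in> {\<omega>\<in>space M. ereal l \<le> run_max X \<tau> \<omega>}" using \<omega>M by simp
qed

text \<open>The crossing events replace the first hitting time of level \<open>l\<close>: they are disjoint and
  measurable at the crossing time, so the conditional bound \<open>E_prob\<close> on a subsequent rise applies to
  each of them separately.\<close>
lemma rise_after_crossing_bound:
  fixes \<tau> :: "'a \<Rightarrow> ennreal" and E :: "real \<Rightarrow> 'a set"
  assumes \<tau>: "stopping_time F \<tau>" and l: "l > 0" and p: "p \<ge> 0"
    and E_sets: "\<And>s. s \<ge> 0 \<Longrightarrow> E s \<in> sets M"
    and E_prob: "\<And>s G. s \<ge> 0 \<Longrightarrow> G \<in> sets (F (ennreal s)) \<Longrightarrow> measure M (G \<inter> E s) \<le> p * measure M G"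
    and rise: "\<And>s \<omega> t. s \<ge> 0 \<Longrightarrow> \<omega> \<in> space M \<Longrightarrow> s \<le> t \<Longrightarrow> t \<le> s + T \<Longrightarrow>
                 \<bar>X s \<omega>\<bar> + 3 * l / 8 < \<bar>X t \<omega>\<bar> \<Longrightarrow> \<omega> \<in> E s"
    and "m \<le> n"
  shows "measure M (dyadic_exceedance_event \<tau> T (3 * l / 2) \<inter> modulus_event (T + 1) (l / 8) m)
    \<le> p * measure M (\<Union>k. crossing_event l \<tau> n k)"
proof -
  define G where "G k = crossing_event l \<tau> n k" for k
  have G_sets: "G k \<in> sets M" for k
    using crossing_event_sets_F[OF \<tau>] sets_F_subset unfolding G_def by blast
  define K where "K = nat \<lceil>T * 2^n\<rceil>"
  define s where "s k = real (Suc k) / 2^n" for k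
  have s_nonneg: "s k \<ge> 0" for k by (simp add: s_def)
  have "dyadic_exceedance_event \<tau> T (3 * l / 2) \<inter> modulus_event (T + 1) (l / 8) m
      \<subseteq> (\<Union>k<K. G k \<inter> E (s k))"
  proof
    fix \<omega> assume "\<omega> \<in> dyadic_exceedance_event \<tau> T (3 * l / 2) \<inter> modulus_event (T + 1) (l / 8) m"
    then obtain k t where k: "k < K" "\<omega> \<in> G k" "s k \<le> t" "t \<le> s k + T"
        "\<bar>X (s k) \<omega>\<bar> + 3 * l / 8 < \<bar>X t \<omega>\<bar>"
      using crossing_then_rise[OF _ \<open>m \<le> n\<close> l] unfolding G_def K_def s_def by blast
    moreover have "\<omega> \<in> space M" using k(2) unfolding G_def crossing_event_def by auto
    ultimately have "\<omega> \<in> E (s k)" using rise[OF s_nonneg] by blast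
    then show "\<omega> \<in> (\<Union>k<K. G k \<inter> E (s k))" using k(1,2) by blast
  qed
  then have "measure M (dyadic_exceedance_event \<tau> T (3 * l / 2) \<inter> modulus_event (T + 1) (l / 8) m)
      \<le> measure M (\<Union>k<K. G k \<inter> E (s k))"
    using G_sets E_sets[OF s_nonneg] by (intro finite_measure_mono) auto
  also have "\<dots> \<le> (\<Sum>k<K. measure M (G k \<inter> E (s k)))"
    using G_sets E_sets[OF s_nonneg] by (intro finite_measure_subadditive_finite) auto
  also have "\<dots> \<le> (\<Sum>k<K. p * measure M (G k))"
    using crossing_event_sets_F[OF \<tau>] unfolding G_def s_def by (intro sum_mono E_prob) auto
  also have "\<dots> = p * measure M (\<Union>k<K. G k)"
    using G_sets first_grid_crossing_unique unfolding sum_distrib_left[symmetric] G_def crossing_event_def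
    by (subst finite_measure_finite_Union) (auto simp: disjoint_family_on_def)
  also have "\<dots> \<le> p * measure M (\<Union>k. G k)"
    using G_sets by (intro mult_left_mono[OF finite_measure_mono p]) auto
  finally show ?thesis unfolding G_def .
qed

lemma stopped_exceedance_bound:
  fixes \<tau> :: "'a \<Rightarrow> ennreal" and E :: "real \<Rightarrow> 'a set"
  assumes \<tau>: "stopping_time F \<tau>" and l: "l > 0" and p: "p \<ge> 0"
    and E_sets: "\<And>s. s \<ge> 0 \<Longrightarrow> E s \<in> sets M"
    and E_prob: "\<And>s G. s \<ge> 0 \<Longrightarrow> G \<in> sets (F (ennreal s)) \<Longrightarrow> measure M (G \<inter> E s) \<le> p * measure M G"
    and rise: "\<And>s \<omega> t. s \<ge> 0 \<Longrightarrow> \<omega> \<in> space M \<Longrightarrow> s \<le> t \<Longrightarrow> t \<le> s + T \<Longrightarrow>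
                 \<bar>X s \<omega>\<bar> + 3 * l / 8 < \<bar>X t \<omega>\<bar> \<Longrightarrow> \<omega> \<in> E s"
  shows "measure M {\<omega>\<in>space M. \<tau> \<omega> < ennreal T \<and> (\<exists>s\<ge>0. ennreal s \<le> \<tau> \<omega> \<and> 3 * l / 2 < \<bar>X s \<omega>\<bar>)}
    \<le> p * measure M {\<omega>\<in>space M. ereal l \<le> run_max X \<tau> \<omega>}"
proof (rule measure_le_mult_of_monotone_approximations)
  have \<tau>_meas: "\<tau> \<in> borel_measurable M"
    using measurable_stopping_time[OF \<tau>] sets_F_subset space_F by blast
  show "{\<omega>\<in>space M. \<tau> \<omega> < ennreal T \<and> (\<exists>s\<ge>0. ennreal s \<le> \<tau> \<omega> \<and> 3 * l / 2 < \<bar>X s \<omega>\<bar>)}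
    \<subseteq> (\<Union>m. dyadic_exceedance_event \<tau> T (3 * l / 2) \<inter> modulus_event (T + 1) (l / 8) m)"
    unfolding exceedance_event_eq_dyadic using modulus_events_cover[of "l / 8" "T + 1"] l
    by (auto simp: dyadic_exceedance_event_def)
  show "range (\<lambda>m. dyadic_exceedance_event \<tau> T (3 * l / 2) \<inter> modulus_event (T + 1) (l / 8) m) \<subseteq> sets M"
    using dyadic_exceedance_event_sets[OF \<tau>_meas] modulus_event_sets by auto
  show "incseq (\<lambda>m. dyadic_exceedance_event \<tau> T (3 * l / 2) \<inter> modulus_event (T + 1) (l / 8) m)"
    unfolding incseq_Suc_iff modulus_event_def by (fastforce elim!: dyadic_modulus_le_mono simp: field_simps)
  show "range (\<lambda>n. \<Union>k. crossing_event l \<tau> n k) \<subseteq> sets M"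
    using crossing_event_sets_F[OF \<tau>] sets_F_subset by blast
  show "{\<omega>\<in>space M. ereal l \<le> run_max X \<tau> \<omega>} \<in> sets M" by (rule run_max_ge_sets[OF \<tau>_meas])
  show "(\<Inter>n. \<Union>n'\<in>{n..}. \<Union>k. crossing_event l \<tau> n' k) \<subseteq> {\<omega>\<in>space M. ereal l \<le> run_max X \<tau> \<omega>}"
    by (rule limsup_crossing_events_subset)
qed (use rise_after_crossing_bound[OF assms] p in auto)

lemma X_le_of_small_increments:
  assumes \<omega>: "\<omega> \<in> space M" and "0 \<le> s" "s \<le> t"
    and small: "\<And>r. s \<le> r \<Longrightarrow> r \<le> t \<Longrightarrow> \<bar>W r \<omega> - W s \<omega>\<bar> \<le> c"
  shows "\<bar>X t \<omega>\<bar> \<le> \<bar>X s \<omega>\<bar> + 2 * c"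
proof -
  have "\<bar>X t \<omega> - X s \<omega> * exp (- \<alpha> * (t - s))\<bar> \<le> 2 * c"
    by (rule ou_increment_bound[OF alpha_pos X_continuous[OF \<omega>] X_integral_eq[OF \<omega>] assms(2,3) small])
  moreover have "\<bar>X s \<omega>\<bar> * exp (- \<alpha> * (t - s)) \<le> \<bar>X s \<omega>\<bar>"
    using alpha_pos assms(3) by (simp add: mult_left_le)
  ultimately show ?thesis
    using abs_triangle_ineq2[of "X t \<omega>" "X s \<omega> * exp (- \<alpha> * (t - s))"] by (simp add: abs_mult)
qed

lemma short_horizon_bound:
  assumes \<tau>: "stopping_time F \<tau>" and l: "l > 0" and T: "T > 0"
  shows "measure M {\<omega>\<in>space M. \<tau> \<omega> < ennreal T \<and> (\<exists>s\<ge>0. ennreal s \<le> \<tau> \<omega> \<and> 3 * l / 2 < \<bar>X s \<omega>\<bar>)}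
    \<le> 4 * exp (- ((3*l/16)^2) / (8 * T)) * measure M {\<omega>\<in>space M. ereal l \<le> run_max X \<tau> \<omega>}"
proof (rule stopped_exceedance_bound[OF \<tau> l, where E = "\<lambda>s. excursion_event s T (3*l/16)"])
  show "excursion_event s T (3*l/16) \<in> sets M" if "s \<ge> 0" for s
    by (rule excursion_event_sets[OF that T])
  show "measure M (G \<inter> excursion_event s T (3*l/16)) \<le> 4 * exp (- ((3*l/16)^2) / (8 * T)) * measure M G"
    if "s \<ge> 0" "G \<in> sets (F (ennreal s))" for s G
    using excursion_event_prob[OF that(1) T _ that(2), of "3*l/16"] l by (simp add: mult_ac)
  show "\<omega> \<in> excursion_event s T (3*l/16)"
    if "s \<ge> 0" "\<omega> \<in> space M" "s \<le> t" "t \<le> s + T" "\<bar>X s \<omega>\<bar> + 3 * l / 8 < \<bar>X t \<omega>\<bar>" for s \<omega> t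
  proof (rule ccontr)
    assume "\<omega> \<notin> excursion_event s T (3*l/16)"
    then have "\<bar>W (s + (r - s)) \<omega> - W s \<omega>\<bar> < 3*l/16" if "s \<le> r" "r \<le> t" for r
      using increment_lt_outside_excursion[of \<omega> s T "3*l/16" "r - s"] \<open>\<omega> \<in> space M\<close> \<open>s \<ge> 0\<close> T l
        \<open>t \<le> s + T\<close> that by auto
    then have "\<bar>X t \<omega>\<bar> \<le> \<bar>X s \<omega>\<bar> + 2 * (3*l/16)"
      using X_le_of_small_increments[OF \<open>\<omega> \<in> space M\<close> \<open>s \<ge> 0\<close> \<open>s \<le> t\<close>, of "3*l/16"] by fastforce
    then show False using that(5) by simp
  qed
qed simp

lemma long_horizon_bound:
  assumes \<tau>: "stopping_time F \<tau>" and l: "l > 0" and N: "\<alpha> * T \<le> real N"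
  shows "measure M {\<omega>\<in>space M. \<tau> \<omega> < ennreal T \<and> (\<exists>s\<ge>0. ennreal s \<le> \<tau> \<omega> \<and> 3 * l / 2 < \<bar>X s \<omega>\<bar>)}
    \<le> 4 * real N * exp (- ((l/16)^2) / (8 * (1/\<alpha>))) * measure M {\<omega>\<in>space M. ereal l \<le> run_max X \<tau> \<omega>}"
proof (rule stopped_exceedance_bound[OF \<tau> l,
    where E = "\<lambda>s. \<Union>i<N. excursion_event (s + real i / \<alpha>) (1/\<alpha>) (l/16)"])
  have L: "1 / \<alpha> > 0" using alpha_pos by simp
  have block_start: "s + real i / \<alpha> \<ge> 0" if "s \<ge> 0" for s i using that alpha_pos by simp
  show "(\<Union>i<N. excursion_event (s + real i / \<alpha>) (1/\<alpha>) (l/16)) \<in> sets M" if "s \<ge> 0" for s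
    using excursion_event_sets[OF block_start[OF that] L] by blast
  show "measure M (G \<inter> (\<Union>i<N. excursion_event (s + real i / \<alpha>) (1/\<alpha>) (l/16)))
      \<le> 4 * real N * exp (- ((l/16)^2) / (8 * (1/\<alpha>))) * measure M G"
    if s: "s \<ge> 0" and G: "G \<in> sets (F (ennreal s))" for s G
  proof -
    have GM: "G \<in> sets M" using G sets_F_subset by blast
    have "ennreal s \<le> ennreal (s + real i / \<alpha>)" for i using alpha_pos by (intro ennreal_leI) simp
    then have "G \<in> sets (F (ennreal (s + real i / \<alpha>)))" for i using G sets_F_mono by blast
    then have "measure M (G \<inter> excursion_event (s + real i / \<alpha>) (1/\<alpha>) (l/16))
        \<le> 4 * measure M G * exp (- ((l/16)^2) / (8 * (1/\<alpha>)))" for i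
      using l by (intro excursion_event_prob[OF block_start[OF s] L]) auto
    then have "(\<Sum>i<N. measure M (G \<inter> excursion_event (s + real i / \<alpha>) (1/\<alpha>) (l/16)))
        \<le> (\<Sum>i<N. 4 * measure M G * exp (- ((l/16)^2) / (8 * (1/\<alpha>))))"
      by (rule sum_mono)
    also have "\<dots> = 4 * real N * exp (- ((l/16)^2) / (8 * (1/\<alpha>))) * measure M G" by simp
    finally have "(\<Sum>i<N. measure M (G \<inter> excursion_event (s + real i / \<alpha>) (1/\<alpha>) (l/16)))
        \<le> 4 * real N * exp (- ((l/16)^2) / (8 * (1/\<alpha>))) * measure M G" .
    moreover have "measure M (G \<inter> (\<Union>i<N. excursion_event (s + real i / \<alpha>) (1/\<alpha>) (l/16)))
        \<le> (\<Sum>i<N. measure M (G \<inter> excursion_event (s + real i / \<alpha>) (1/\<alpha>) (l/16)))"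
      unfolding Int_UN_distrib
      using GM excursion_event_sets[OF block_start[OF s] L] by (intro finite_measure_subadditive_finite) auto
    ultimately show ?thesis by linarith
  qed
  show "\<omega> \<in> (\<Union>i<N. excursion_event (s + real i / \<alpha>) (1/\<alpha>) (l/16))"
    if s: "s \<ge> 0" and \<omega>: "\<omega> \<in> space M" and t: "s \<le> t" "t \<le> s + T"
      and rise: "\<bar>X s \<omega>\<bar> + 3 * l / 8 < \<bar>X t \<omega>\<bar>" for s \<omega> t
  proof (rule ccontr)
    assume outside: "\<omega> \<notin> (\<Union>i<N. excursion_event (s + real i / \<alpha>) (1/\<alpha>) (l/16))"
    have "\<bar>W r \<omega> - W (s + real i / \<alpha>) \<omega>\<bar> \<le> l/16"
      if "i < N" "s + real i / \<alpha> \<le> r" "r \<le> s + real i / \<alpha> + 1 / \<alpha>" for i r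
      using increment_lt_outside_excursion[of \<omega> "s + real i / \<alpha>" "1/\<alpha>" "l/16" "r - (s + real i / \<alpha>)"]
        outside \<omega> block_start[OF s] L l that by auto
    moreover have "T \<le> real N / \<alpha>" using N alpha_pos by (simp add: field_simps)
    then have "t \<le> s + real N / \<alpha>" using t by linarith
    ultimately have "\<bar>X t \<omega>\<bar> \<le> \<bar>X s \<omega>\<bar> + 6 * (l/16)"
      using l t(1) by (intro ou_growth_bound[OF alpha_pos X_continuous[OF \<omega>] X_integral_eq[OF \<omega>] s]) auto
    then show False using rise by simp
  qed
qed simp

lemma log_time_event_subset:
  assumes "l > 0" "\<delta> > 0"
  shows "{\<omega>\<in>space M. run_max X \<tau> \<omega> \<ge> ereal (2 * l) \<and> \<tau> \<omega> \<noteq> \<infinity> \<and>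
                     sqrt (ln (1 + \<alpha> * enn2real (\<tau> \<omega>))) < \<delta> * l}
    \<subseteq> {\<omega>\<in>space M. \<tau> \<omega> < ennreal ((exp ((\<delta> * l)^2) - 1) / \<alpha>) \<and>
         (\<exists>s\<ge>0. ennreal s \<le> \<tau> \<omega> \<and> 3 * l / 2 < \<bar>X s \<omega>\<bar>)}"
proof
  fix \<omega> assume "\<omega> \<in> {\<omega>\<in>space M. run_max X \<tau> \<omega> \<ge> ereal (2 * l) \<and> \<tau> \<omega> \<noteq> \<infinity> \<and>
                     sqrt (ln (1 + \<alpha> * enn2real (\<tau> \<omega>))) < \<delta> * l}"
  then have \<omega>: "\<omega> \<in> space M" and max: "ereal (2 * l) \<le> run_max X \<tau> \<omega>" and "\<tau> \<omega> \<noteq> \<infinity>"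
    and log: "sqrt (ln (1 + \<alpha> * enn2real (\<tau> \<omega>))) < \<delta> * l" by auto
  then obtain r where r: "0 \<le> r" "\<tau> \<omega> = ennreal r" by (cases "\<tau> \<omega>") auto
  have "sqrt (ln (1 + \<alpha> * r)) < sqrt ((\<delta> * l)^2)"
    using log r assms by simp
  then have "ln (1 + \<alpha> * r) < (\<delta> * l)^2" by (simp only: real_sqrt_less_iff)
  then have "1 + \<alpha> * r < exp ((\<delta> * l)^2)"
    using r alpha_pos by (metis add_pos_nonneg exp_ln mult_nonneg_nonneg exp_less_cancel_iff
      less_eq_real_def zero_less_one)
  then have "\<tau> \<omega> < ennreal ((exp ((\<delta> * l)^2) - 1) / \<alpha>)"
    using r alpha_pos by (simp add: ennreal_less_iff field_simps)
  moreover have "ereal (3 * l / 2) < ereal (2 * l)" using assms(1) by simp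
  then have "ereal (3 * l / 2) < run_max X \<tau> \<omega>" using max by (rule less_le_trans)
  then obtain s where "0 \<le> s" "ennreal s \<le> \<tau> \<omega>" "3 * l / 2 < \<bar>X s \<omega>\<bar>"
    unfolding run_max_def less_SUP_iff by auto
  ultimately show "\<omega> \<in> {\<omega>\<in>space M. \<tau> \<omega> < ennreal ((exp ((\<delta> * l)^2) - 1) / \<alpha>) \<and>
         (\<exists>s\<ge>0. ennreal s \<le> \<tau> \<omega> \<and> 3 * l / 2 < \<bar>X s \<omega>\<bar>)}" using \<omega> by auto
qed

end

definition ou_ratio_bound :: "real \<Rightarrow> real \<Rightarrow> real" where
  "ou_ratio_bound \<alpha> \<delta> = (if \<delta>^2 \<le> \<alpha> / 4096 then 4 * exp (- \<alpha> / (8192 * \<delta>^2)) else 1)"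

lemma ou_ratio_bound_nonneg: "0 \<le> ou_ratio_bound \<alpha> \<delta>"
  by (simp add: ou_ratio_bound_def)

lemma ou_ratio_bound_tendsto_zero:
  assumes "\<alpha> > 0"
  shows "(ou_ratio_bound \<alpha> \<longlongrightarrow> 0) (at_right 0)"
proof (rule Lim_transform_eventually)
  show "((\<lambda>\<delta>. 4 * exp (- \<alpha> / (8192 * \<delta>^2))) \<longlongrightarrow> 0) (at_right 0)"
    using assms by real_asymp
  show "\<forall>\<^sub>F \<delta> in at_right 0. 4 * exp (- \<alpha> / (8192 * \<delta>^2)) = ou_ratio_bound \<alpha> \<delta>"
    unfolding eventually_at_right_field
  proof (intro exI[of _ "sqrt (\<alpha> / 4096)"] conjI allI impI)
    show "0 < sqrt (\<alpha> / 4096)" using assms by simp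
    fix \<delta> :: real assume "0 < \<delta>" "\<delta> < sqrt (\<alpha> / 4096)"
    then have "\<delta>^2 < (sqrt (\<alpha> / 4096))^2" by (intro power_strict_mono) auto
    then show "4 * exp (- \<alpha> / (8192 * \<delta>^2)) = ou_ratio_bound \<alpha> \<delta>"
      using assms by (simp add: ou_ratio_bound_def)
  qed
qed

lemma short_horizon_exponent:
  fixes \<alpha> \<delta> l :: real
  assumes \<alpha>: "\<alpha> > 0" and "\<delta> > 0" "l > 0" and x: "(\<delta> * l)^2 \<le> 1/2"
  shows "4 * exp (- ((3*l/16)^2) / (8 * ((exp ((\<delta> * l)^2) - 1) / \<alpha>))) \<le> 4 * exp (- \<alpha> / (8192 * \<delta>^2))"
proof -
  define x where "x = (\<delta> * l)^2"
  have x_pos: "x > 0" using assms by (simp add: x_def)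
  have "exp x \<le> 1 + 2 * x" using exp_bound_lemma[of x] x x_pos by (simp add: x_def)
  then have T: "(exp x - 1) / \<alpha> \<le> 2 * x / \<alpha>" using \<alpha> by (simp add: divide_right_mono)
  have "\<alpha> / (8192 * \<delta>^2) \<le> (3*l/16)^2 / (8 * (2 * x / \<alpha>))"
    using assms unfolding x_def by (simp add: field_simps power2_eq_square)
  also have "\<dots> \<le> (3*l/16)^2 / (8 * ((exp x - 1) / \<alpha>))"
  proof (rule divide_left_mono)
    show "8 * ((exp x - 1) / \<alpha>) \<le> 8 * (2 * x / \<alpha>)" by (rule mult_left_mono[OF T]) simp
    show "0 < 8 * (2 * x / \<alpha>) * (8 * ((exp x - 1) / \<alpha>))" using x_pos \<alpha> by simp
  qed simp
  finally show ?thesis by (simp add: x_def)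
qed

lemma long_horizon_exponent:
  fixes \<alpha> \<delta> l :: real
  assumes \<alpha>: "\<alpha> > 0" and \<delta>: "\<delta> > 0" and "l > 0" and x: "1/2 < (\<delta> * l)^2" and small: "\<delta>^2 \<le> \<alpha> / 4096"
    and N: "real N \<le> exp ((\<delta> * l)^2)"
  shows "4 * real N * exp (- ((l/16)^2) / (8 * (1/\<alpha>))) \<le> 4 * exp (- \<alpha> / (8192 * \<delta>^2))"
proof -
  define x where "x = (\<delta> * l)^2"
  have x_eq: "x = \<delta>^2 * l^2" by (simp add: x_def power_mult_distrib)
  have "4 * real N * exp (- ((l/16)^2) / (8 * (1/\<alpha>))) \<le> 4 * exp x * exp (- (\<alpha> * l^2 / 2048))"
    using N by (simp add: x_def power2_eq_square field_simps)
  also have "\<dots> = 4 * exp (x - \<alpha> * l^2 / 2048)" by (simp only: mult.assoc mult_exp_exp diff_conv_add_uminus)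
  also have "\<dots> \<le> 4 * exp (- \<alpha> / (8192 * \<delta>^2))"
  proof -
    have "x \<le> \<alpha> * l^2 / 4096"
      using mult_right_mono[OF small, of "l^2"] unfolding x_eq by simp
    moreover have "1 < 2 * (\<delta>^2 * l^2)" using x unfolding x_def by (simp add: power_mult_distrib)
    then have "\<alpha> / (8192 * \<delta>^2) \<le> \<alpha> * l^2 / 4096" using \<alpha> \<delta> by (simp add: field_simps)
    ultimately show ?thesis by simp
  qed
  finally show ?thesis .
qed

context ornstein_uhlenbeck
begin

lemma exceedance_before_log_time_bound:
  fixes \<tau> :: "'a \<Rightarrow> ennreal"
  assumes \<tau>: "stopping_time F \<tau>" and \<delta>: "\<delta> > 0" and l: "l > 0" and small: "\<delta>^2 \<le> \<alpha> / 4096"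
  shows "measure M {\<omega>\<in>space M. \<tau> \<omega> < ennreal ((exp ((\<delta> * l)^2) - 1) / \<alpha>) \<and>
           (\<exists>s\<ge>0. ennreal s \<le> \<tau> \<omega> \<and> 3 * l / 2 < \<bar>X s \<omega>\<bar>)}
    \<le> 4 * exp (- \<alpha> / (8192 * \<delta>^2)) * measure M {\<omega>\<in>space M. ereal l \<le> run_max X \<tau> \<omega>}"
    (is "measure M ?B \<le> _ * measure M ?R")
proof -
  define x where "x = (\<delta> * l)^2"
  define T where "T = (exp x - 1) / \<alpha>"
  have T_pos: "T > 0" using \<delta> l alpha_pos by (simp add: T_def x_def)
  show ?thesis
  proof (cases "x \<le> 1/2")
    case True
    have "measure M ?B \<le> 4 * exp (- ((3*l/16)^2) / (8 * T)) * measure M ?R"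
      using short_horizon_bound[OF \<tau> l T_pos] by (simp add: T_def x_def)
    also have "\<dots> \<le> 4 * exp (- \<alpha> / (8192 * \<delta>^2)) * measure M ?R"
      using short_horizon_exponent[OF alpha_pos \<delta> l] True
      unfolding T_def x_def by (intro mult_right_mono) auto
    finally show ?thesis .
  next
    case False
    define N where "N = nat \<lceil>\<alpha> * T\<rceil>"
    have "\<alpha> * T \<le> real N" unfolding N_def by linarith
    have "real N \<le> exp x"
      using T_pos alpha_pos unfolding N_def T_def by (simp add: of_nat_nat)
    have "measure M ?B \<le> 4 * real N * exp (- ((l/16)^2) / (8 * (1/\<alpha>))) * measure M ?R"
      using long_horizon_bound[OF \<tau> l \<open>\<alpha> * T \<le> real N\<close>] by (simp add: T_def x_def)
    also have "\<dots> \<le> 4 * exp (- \<alpha> / (8192 * \<delta>^2)) * measure M ?R"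
      using long_horizon_exponent[OF alpha_pos \<delta> l _ small] False \<open>real N \<le> exp x\<close>
      unfolding x_def by (intro mult_right_mono) auto
    finally show ?thesis .
  qed
qed

lemma exceedance_ratio_bound:
  fixes \<tau> :: "'a \<Rightarrow> ennreal"
  assumes \<tau>: "stopping_time F \<tau>" and \<delta>: "\<delta> > 0" and l: "l > 0"
  shows "measure M {\<omega>\<in>space M. run_max X \<tau> \<omega> \<ge> ereal (2 * l) \<and> \<tau> \<omega> \<noteq> \<infinity> \<and>
                      sqrt (ln (1 + \<alpha> * enn2real (\<tau> \<omega>))) < \<delta> * l}
        \<le> ou_ratio_bound \<alpha> \<delta> * measure M {\<omega>\<in>space M. run_max X \<tau> \<omega> \<ge> ereal l}"
    (is "measure M ?A \<le> _ * measure M ?R")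
proof (cases "\<delta>^2 \<le> \<alpha> / 4096")
  case False
  have "?A \<subseteq> ?R" using l by (auto intro: order.trans[rotated])
  moreover have "?R \<in> sets M"
    using run_max_ge_sets measurable_stopping_time[OF \<tau>] sets_F_subset space_F by blast
  ultimately show ?thesis using False by (simp add: ou_ratio_bound_def finite_measure_mono)
next
  case True
  let ?B = "{\<omega>\<in>space M. \<tau> \<omega> < ennreal ((exp ((\<delta> * l)^2) - 1) / \<alpha>) \<and>
              (\<exists>s\<ge>0. ennreal s \<le> \<tau> \<omega> \<and> 3 * l / 2 < \<bar>X s \<omega>\<bar>)}"
  have "?B \<in> sets M"
    unfolding exceedance_event_eq_dyadic using dyadic_exceedance_event_sets measurable_stopping_time[OF \<tau>]
      sets_F_subset space_F by blast
  then have "measure M ?A \<le> measure M ?B"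
    using log_time_event_subset[OF l \<delta>] by (intro finite_measure_mono)
  also have "\<dots> \<le> ou_ratio_bound \<alpha> \<delta> * measure M ?R"
    using exceedance_before_log_time_bound[OF \<tau> \<delta> l True] True by (simp add: ou_ratio_bound_def)
  finally show ?thesis .
qed

end

theorem lemma3p5:
  fixes M :: "'a measure" and F :: "ennreal \<Rightarrow> 'a measure"
    and W X :: "real \<Rightarrow> 'a \<Rightarrow> real" and \<alpha> :: real
  assumes "\<alpha> > 0"
    and "brownian_motion_wrt M F W"
    and "OU_solution M F \<alpha> W X"
  shows "\<exists>\<phi> :: real \<Rightarrow> real. (\<forall>\<delta>>0. 0 \<le> \<phi> \<delta>) \<and> (\<phi> \<longlongrightarrow> 0) (at_right 0) \<and>
     (\<forall>\<tau> :: 'a \<Rightarrow> ennreal. \<forall>(\<delta>::real) (l::real). stopping_time F \<tau> \<and> \<delta> > 0 \<and> l > 0 \<longrightarrow>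
        measure M {\<omega>\<in>space M. run_max X \<tau> \<omega> \<ge> ereal (2 * l) \<and> \<tau> \<omega> \<noteq> \<infinity> \<and>
                      sqrt (ln (1 + \<alpha> * enn2real (\<tau> \<omega>))) < \<delta> * l}
        \<le> \<phi> \<delta> * measure M {\<omega>\<in>space M. run_max X \<tau> \<omega> \<ge> ereal l})"
proof -
  interpret ornstein_uhlenbeck M F W \<alpha> X
    using assms by (intro ornstein_uhlenbeck.intro brownian_motion.intro ornstein_uhlenbeck_axioms.intro)
  show ?thesis
    using ou_ratio_bound_nonneg ou_ratio_bound_tendsto_zero[OF \<open>\<alpha> > 0\<close>] exceedance_ratio_bound
    by (intro exI[of _ "ou_ratio_bound \<alpha>"]) blast
qed

end
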